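(* Suppose $d=3$, let $D=\sum_{\rho\in\Sigma}n_\rho D_\rho$ with $(n_\rho)\in\mathbb{Z}^\Sigma$, and let $\Pi\subseteq\Sigma$. Then exactly one of the following holds: (i) $\tilde H^0(\Pi\cap\Xi;k)=0$ and the recession cone of the polyhedron $C_\Pi$ is $3$-dimensional; (ii) $\tilde H^0(\Pi\cap\Xi;k)\ne0$ and the set $C^{ss}_\Pi$ is either bounded or empty.
   Context: $k$ a field, $N\cong\mathbb{Z}^3$, $M=\operatorname{Hom}(N,\mathbb{Z})$, $\sigma\subset N_\mathbb{R}$ a strongly convex rational polyhedral cone of dimension $3$, $\Sigma=\sigma(1)$ its rays with primitive generators $n(\rho)$. $C_\Pi=\{m\in M_\mathbb{R}:\langle m,n(\rho)\rangle\le-n_\rho\ (\rho\in\Pi),\ \langle m,n(\rho)\rangle\ge-n_\rho\ (\rho\in\Sigma\setminus\Pi)\}$; $C^{ss}_\Pi$ is defined likewise but with strict inequality $<$ for $\rho\in\Pi$. The recession cone of $C_\Pi$ is the dual of $\sigma_\Pi=\operatorname{cone}(-n(\rho):\rho\in\Pi;\ n(\rho):\rho\notin\Pi)$. For $\Upsilon\subseteq\Sigma$, $\tau_\Upsilon$ is the minimal face of $\sigma$ whose rays contain $\Upsilon$; $\Xi=\{\Upsilon\subseteq\Sigma:\tau_\Upsilon\ne\sigma\}$ and $\Pi\cap\Xi=\{\Upsilon\in\Xi:\Upsilon\subseteq\Pi\}$. $\tilde H^j$ is reduced simplicial cohomology (augmented cochain complex, empty face in degree $-1$); by the paper's convention,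 for $\Pi=\emptyset$ all reduced cohomology of $\Pi\cap\Xi$ vanishes. *)

theory Defs
  imports "HOL-Analysis.Analysis"
begin

text \<open>N_R = M_R = real^3, lattices N = M = Z^3, pairing = inner product.\<close>

definition integral_vec :: "real^3 \<Rightarrow> bool" where
  "integral_vec v \<longleftrightarrow> (\<forall>i. v $ i \<in> \<int>)"

definition scrp_cone3 :: "(real^3) set \<Rightarrow> bool" where
  "scrp_cone3 \<sigma> \<longleftrightarrow>
     (\<exists>G. finite G \<and> (\<forall>g\<in>G. integral_vec g) \<and> \<sigma> = convex_cone hull G)
     \<and> \<sigma> \<inter> uminus ` \<sigma> = {0} \<and> aff_dim \<sigma> = 3"

definition rays :: "(real^3) set \<Rightarrow> (real^3) set set" where
  "rays \<sigma> = {\<rho>. \<rho> face_of \<sigma> \<and> aff_dim \<rho> = 1}"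

definition prim_gen :: "(real^3) set \<Rightarrow> real^3" where
  "prim_gen \<rho> = (THE v. v \<in> \<rho> \<and> v \<noteq> 0 \<and> integral_vec v \<and>
       (\<forall>w\<in>\<rho>. integral_vec w \<longrightarrow> (\<exists>m::nat. w = of_nat m *\<^sub>R v)))"

definition tau :: "(real^3) set \<Rightarrow> (real^3) set set \<Rightarrow> (real^3) set" where
  "tau \<sigma> \<Upsilon> = \<Inter> {F. F face_of \<sigma> \<and> (\<forall>\<rho>\<in>\<Upsilon>. \<rho> \<subseteq> F)}"

definition Xi :: "(real^3) set \<Rightarrow> (real^3) set set set" where
  "Xi \<sigma> = {\<Upsilon>. \<Upsilon> \<subseteq> rays \<sigma> \<and> tau \<sigma> \<Upsilon> \<noteq> \<sigma>}"

definition restr_Xi :: "(real^3) set \<Rightarrow> (real^3) set set \<Rightarrow> (real^3) set set set" where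
  "restr_Xi \<sigma> P = {\<Upsilon> \<in> Xi \<sigma>. \<Upsilon> \<subseteq> P}"

text \<open>Reduced simplicial cohomology in degree 0 with coefficients in the field 'k vanishes
  (augmented cochain complex): ker(delta^0 : C^0 -> C^1) = im(delta^(-1) : k -> C^0).
  A 0-cochain is a k-valued function on the vertices; it is a cocycle iff it agrees on the two
  ends of each edge; the image of delta^(-1) consists of the constant cochains.\<close>
definition reduced_H0_vanishes :: "'a set set \<Rightarrow> 'k::field itself \<Rightarrow> bool" where
  "reduced_H0_vanishes K (_::'k itself) \<longleftrightarrow>
     (\<forall>f::'a \<Rightarrow> 'k. (\<forall>u v. {u, v} \<in> K \<longrightarrow> f u = f v) \<longrightarrow>
        (\<exists>c. \<forall>v. {v} \<in> K \<longrightarrow> f v = c))"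

definition C_Pi :: "(real^3) set \<Rightarrow> ((real^3) set \<Rightarrow> int) \<Rightarrow> (real^3) set set \<Rightarrow> (real^3) set" where
  "C_Pi \<sigma> n P = {m. (\<forall>\<rho>\<in>P. m \<bullet> prim_gen \<rho> \<le> - of_int (n \<rho>)) \<and>
                      (\<forall>\<rho>\<in>rays \<sigma> - P. m \<bullet> prim_gen \<rho> \<ge> - of_int (n \<rho>))}"

definition C_ss :: "(real^3) set \<Rightarrow> ((real^3) set \<Rightarrow> int) \<Rightarrow> (real^3) set set \<Rightarrow> (real^3) set" where
  "C_ss \<sigma> n P = {m. (\<forall>\<rho>\<in>P. m \<bullet> prim_gen \<rho> < - of_int (n \<rho>)) \<and>
                      (\<forall>\<rho>\<in>rays \<sigma> - P. m \<bullet> prim_gen \<rho> \<ge> - of_int (n \<rho>))}"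

text \<open>sigma_Pi and the recession cone of C_Pi (= dual cone of sigma_Pi).\<close>
definition sigma_Pi :: "(real^3) set \<Rightarrow> (real^3) set set \<Rightarrow> (real^3) set" where
  "sigma_Pi \<sigma> P = convex_cone hull
     ((\<lambda>\<rho>. - prim_gen \<rho>) ` P \<union> prim_gen ` (rays \<sigma> - P))"

definition rec_cone_C_Pi :: "(real^3) set \<Rightarrow> (real^3) set set \<Rightarrow> (real^3) set" where
  "rec_cone_C_Pi \<sigma> P = {m. \<forall>v\<in>sigma_Pi \<sigma> P. m \<bullet> v \<ge> 0}"

end

theory Submission
  imports Defs
begin

text \<open>
  Call two rays adjacent if they lie in a common proper face of \<open>\<sigma>\<close>; then
  reduced \<open>H\<^sup>0(\<Pi> \<inter> \<Xi>)\<close> vanishes exactly when \<open>\<Pi>\<close> is connected in this graph.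
  The recession cone of \<open>C\<^sub>\<Pi>\<close> is the dual of \<open>\<sigma>\<^sub>\<Pi>\<close>, the cone spanned by the
  signed generators \<open>-n(\<rho>)\<close> (\<open>\<rho> \<in> \<Pi>\<close>) and \<open>n(\<rho>)\<close> (\<open>\<rho> \<notin> \<Pi>\<close>).

  If \<open>\<Pi>\<close> is connected, \<open>0\<close> is not in the convex hull of the signed generators: by
  Caratheodory it would be a positive combination of at most four of them, and each such
  configuration is ruled out by a functional that is nonnegative on them and positive on one
  of them (a form positive on \<open>\<sigma>\<close>, the exposing form of a ray, or the normal of the plane
  through two rays outside \<open>\<Pi>\<close>, which does not separate the connected set \<open>\<Pi>\<close>).
  So some form is positive on all signed generators, and a neighbourhood of it lies in the
  dual of \<open>\<sigma>\<^sub>\<Pi>\<close>.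

  If \<open>\<Pi>\<close> is not connected, \<open>\<sigma>\<^sub>\<Pi>\<close> is the whole space: otherwise some \<open>m \<noteq> 0\<close> is
  \<open>\<le> 0\<close> on \<open>\<Pi>\<close> and \<open>\<ge> 0\<close> off \<open>\<Pi>\<close>, and walking along edges from any ray of \<open>\<Pi>\<close>
  towards the rays minimising \<open>m/height\<close> (which are pairwise adjacent) connects \<open>\<Pi>\<close>.
  Every signed generator is bounded below on \<open>C\<^sup>s\<^sup>s\<^sub>\<Pi>\<close>, hence so is every linear form,
  and \<open>C\<^sup>s\<^sup>s\<^sub>\<Pi>\<close> is bounded.
\<close>

unbundle cross3_syntax

section \<open>Linear algebra in \<open>\<real>\<^sup>3\<close>\<close>

lemma cross_triple_expansion:
  fixes a b c v :: "real^3"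
  shows "(a \<bullet> (b \<times> c)) *\<^sub>R v = (v \<bullet> (b \<times> c)) *\<^sub>R a + (v \<bullet> (c \<times> a)) *\<^sub>R b + (v \<bullet> (a \<times> b)) *\<^sub>R c"
  by (simp add: cross3_simps forall_3)

lemma in_span_if_triple_nonzero:
  fixes a b c v :: "real^3"
  assumes "a \<bullet> (b \<times> c) \<noteq> 0"
  obtains \<alpha> \<beta> \<gamma> where "v = \<alpha> *\<^sub>R a + \<beta> *\<^sub>R b + \<gamma> *\<^sub>R c"
proof -
  let ?d = "a \<bullet> (b \<times> c)"
  have "v = (1 / ?d) *\<^sub>R (?d *\<^sub>R v)"
    using assms by simp
  also have "\<dots> = (1 / ?d) *\<^sub>R ((v \<bullet> (b \<times> c)) *\<^sub>R a + (v \<bullet> (c \<times> a)) *\<^sub>R b + (v \<bullet> (a \<times> b)) *\<^sub>R c)"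
    by (simp only: cross_triple_expansion[of a b c v])
  also have "\<dots> = ((v \<bullet> (b \<times> c)) / ?d) *\<^sub>R a + ((v \<bullet> (c \<times> a)) / ?d) *\<^sub>R b
      + ((v \<bullet> (a \<times> b)) / ?d) *\<^sub>R c"
    by (simp add: scaleR_add_right)
  finally show ?thesis
    by (rule that)
qed

lemma triple_eq_0_if_orthogonal:
  fixes a b c u :: "real^3"
  assumes "u \<noteq> 0" "u \<bullet> a = 0" "u \<bullet> b = 0" "u \<bullet> c = 0"
  shows "a \<bullet> (b \<times> c) = 0"
proof (rule ccontr)
  assume "a \<bullet> (b \<times> c) \<noteq> 0"
  then obtain \<alpha> \<beta> \<gamma> where u: "u = \<alpha> *\<^sub>R a + \<beta> *\<^sub>R b + \<gamma> *\<^sub>R c"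
    by (rule in_span_if_triple_nonzero)
  have "u \<bullet> u = \<alpha> * (u \<bullet> a) + \<beta> * (u \<bullet> b) + \<gamma> * (u \<bullet> c)"
    by (subst (2) u) (simp add: inner_add_right)
  then show False
    using assms by simp
qed

lemma in_plane_if_triple_eq_0:
  fixes b d v :: "real^3"
  assumes "b \<times> d \<noteq> 0" "v \<bullet> (b \<times> d) = 0"
  obtains \<beta> \<delta> where "v = \<beta> *\<^sub>R b + \<delta> *\<^sub>R d"
proof -
  let ?n = "b \<times> d"
  have "b \<bullet> (d \<times> ?n) = ?n \<bullet> ?n"
    using cross_triple[of b d ?n] by (simp add: inner_commute)
  then have "b \<bullet> (d \<times> ?n) \<noteq> 0"
    using assms(1) by simp
  then obtain \<beta> \<delta> \<gamma> where v: "v = \<beta> *\<^sub>R b + \<delta> *\<^sub>R d + \<gamma> *\<^sub>R ?n"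
    by (rule in_span_if_triple_nonzero)
  then have "v \<bullet> ?n = \<gamma> * (?n \<bullet> ?n)"
    by (simp add: inner_add_left dot_cross_self)
  then have "\<gamma> = 0"
    using assms by simp
  then show ?thesis
    using that v by simp
qed

lemma exists_not_parallel:
  fixes u :: "real^3"
  obtains e where "\<And>c. e \<noteq> c *\<^sub>R u"
proof (rule ccontr)
  assume "\<not> thesis"
  then have "\<forall>e. \<exists>c. e = c *\<^sub>R u"
    using that by blast
  then obtain c1 c2 where c1: "axis 1 1 = c1 *\<^sub>R u" and c2: "axis 2 1 = c2 *\<^sub>R u"
    by meson
  have "c2 *\<^sub>R axis 1 1 = c1 *\<^sub>R (axis 2 1 :: real^3)"
    unfolding c1 c2 by simp
  then have "(c2 *\<^sub>R axis 1 1 :: real^3) $ 1 = (c1 *\<^sub>R axis 2 1 :: real^3) $ 1"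
    by (rule arg_cong)
  then have "c2 = 0"
    by (simp add: axis_def)
  then have "(axis 2 1 :: real^3) = 0"
    using c2 by simp
  then show False
    by (metis axis_eq_0_iff one_neq_zero)
qed

section \<open>Convex cones and their duals\<close>

lemma tau_ne_iff:
  assumes "convex S" "\<forall>\<rho>\<in>\<Upsilon>. \<rho> \<subseteq> S"
  shows "tau S \<Upsilon> \<noteq> S \<longleftrightarrow> (\<exists>F. F face_of S \<and> F \<noteq> S \<and> (\<forall>\<rho>\<in>\<Upsilon>. \<rho> \<subseteq> F))"
proof
  assume "tau S \<Upsilon> \<noteq> S"
  moreover have "S \<in> {F. F face_of S \<and> (\<forall>\<rho>\<in>\<Upsilon>. \<rho> \<subseteq> F)}"
    using face_of_refl[OF assms(1)] assms(2) by blast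
  ultimately show "\<exists>F. F face_of S \<and> F \<noteq> S \<and> (\<forall>\<rho>\<in>\<Upsilon>. \<rho> \<subseteq> F)"
    unfolding tau_def by blast
next
  assume "\<exists>F. F face_of S \<and> F \<noteq> S \<and> (\<forall>\<rho>\<in>\<Upsilon>. \<rho> \<subseteq> F)"
  then obtain F where "F face_of S" "F \<noteq> S" "\<forall>\<rho>\<in>\<Upsilon>. \<rho> \<subseteq> F"
    by blast
  then have "tau S \<Upsilon> \<subseteq> F" "F \<subseteq> S"
    unfolding tau_def by (auto dest: face_of_imp_subset)
  then show "tau S \<Upsilon> \<noteq> S"
    using \<open>F \<noteq> S\<close> by blast
qed

lemma convex_cone_bounded_below_directions:
  "convex_cone {e. \<exists>b. \<forall>m\<in>C. b \<le> m \<bullet> e}"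
proof (rule convex_cone_iff[THEN iffD2], intro conjI ballI allI impI)
  show "0 \<in> {e. \<exists>b. \<forall>m\<in>C. b \<le> m \<bullet> e}"
    by (intro CollectI exI[of _ 0]) simp
next
  fix x y assume "x \<in> {e. \<exists>b. \<forall>m\<in>C. b \<le> m \<bullet> e}" "y \<in> {e. \<exists>b. \<forall>m\<in>C. b \<le> m \<bullet> e}"
  then obtain b1 b2 where "\<forall>m\<in>C. b1 \<le> m \<bullet> x" "\<forall>m\<in>C. b2 \<le> m \<bullet> y"
    by blast
  then have "\<forall>m\<in>C. b1 + b2 \<le> m \<bullet> (x + y)"
    by (simp add: inner_add_right add_mono)
  then show "x + y \<in> {e. \<exists>b. \<forall>m\<in>C. b \<le> m \<bullet> e}"
    by blast
next
  fix x and c :: real assume "x \<in> {e. \<exists>b. \<forall>m\<in>C. b \<le> m \<bullet> e}" "0 \<le> c"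
  then obtain b where "\<forall>m\<in>C. b \<le> m \<bullet> x"
    by blast
  then have "\<forall>m\<in>C. c * b \<le> m \<bullet> (c *\<^sub>R x)"
    using \<open>0 \<le> c\<close> by (simp add: mult_left_mono)
  then show "c *\<^sub>R x \<in> {e. \<exists>b. \<forall>m\<in>C. b \<le> m \<bullet> e}"
    by blast
qed

lemma bounded_if_bounded_below_on_spanning:
  fixes C :: "'a::euclidean_space set"
  assumes span: "convex_cone hull W = UNIV"
    and below: "\<And>w. w \<in> W \<Longrightarrow> \<exists>b. \<forall>m\<in>C. b \<le> m \<bullet> w"
  shows "bounded C"
proof -
  have "convex_cone hull W \<subseteq> {e. \<exists>b. \<forall>m\<in>C. b \<le> m \<bullet> e}"
    using below convex_cone_bounded_below_directions by (intro hull_minimal) auto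
  then have "\<exists>b. \<forall>m\<in>C. b \<le> m \<bullet> e" for e
    using span by blast
  then obtain b where b: "\<And>e m. m \<in> C \<Longrightarrow> b e \<le> m \<bullet> e"
    by metis
  show ?thesis
    unfolding bounded_iff
  proof (intro exI ballI)
    fix m assume "m \<in> C"
    then have "\<bar>m \<bullet> i\<bar> \<le> \<bar>b i\<bar> + \<bar>b (- i)\<bar>" for i
      using b[of m i] b[of m "- i"] by (simp add: abs_le_iff; arith)
    then have "(\<Sum>i\<in>Basis. \<bar>m \<bullet> i\<bar>) \<le> (\<Sum>i\<in>Basis. \<bar>b i\<bar> + \<bar>b (- i)\<bar>)"
      by (intro sum_mono)
    then show "norm m \<le> (\<Sum>i\<in>Basis. \<bar>b i\<bar> + \<bar>b (- i)\<bar>)"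
      using norm_le_l1[of m] by linarith
  qed
qed

lemma aff_dim_dual_cone_eq_DIM:
  fixes W :: "'a::euclidean_space set"
  assumes "finite W" "\<forall>w\<in>W. 0 < m \<bullet> w"
  shows "aff_dim {z. \<forall>v\<in>convex_cone hull W. 0 \<le> z \<bullet> v} = DIM('a)"
    (is "aff_dim ?D = _")
proof -
  define U where "U = (\<Inter>w\<in>W. {z. w \<bullet> z > 0})"
  have "open U"
    unfolding U_def using assms(1) by (intro open_INT ballI open_halfspace_gt)
  moreover have "m \<in> U"
    using assms(2) unfolding U_def by (simp add: inner_commute)
  ultimately have "aff_dim U = DIM('a)"
    by (intro aff_dim_open) auto
  moreover have "U \<subseteq> ?D"
  proof
    fix z assume "z \<in> U"
    then have "W \<subseteq> {v. 0 \<le> z \<bullet> v}"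
      unfolding U_def by (auto simp: inner_commute intro: less_imp_le)
    then have "convex_cone hull W \<subseteq> {v. 0 \<le> z \<bullet> v}"
      by (rule hull_minimal) (rule convex_cone_halfspace_ge)
    then show "z \<in> ?D"
      by blast
  qed
  then have "aff_dim U \<le> aff_dim ?D"
    by (rule aff_dim_subset)
  ultimately show ?thesis
    using aff_dim_le_DIM[of ?D] by linarith
qed

lemma nonneg_functional_if_convex_cone_hull_neq_UNIV:
  fixes W :: "'a::euclidean_space set"
  assumes "finite W" "convex_cone hull W \<noteq> UNIV"
  obtains a where "a \<noteq> 0" "\<And>w. w \<in> W \<Longrightarrow> 0 \<le> a \<bullet> w"
proof -
  let ?K = "convex_cone hull W"
  obtain z where "z \<notin> ?K"
    using assms(2) by blast
  moreover have "closed ?K"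
    using assms(1) by (rule closed_convex_cone_hull)
  ultimately obtain a b where ab: "a \<bullet> z < b" "\<forall>x\<in>?K. b < a \<bullet> x"
    using separating_hyperplane_closed_point[OF convex_convex_cone_hull] by blast
  have "b < a \<bullet> 0"
    using ab(2) convex_cone_hull_contains_0 by blast
  then have "b < 0"
    by simp
  have nonneg: "0 \<le> a \<bullet> x" if "x \<in> ?K" for x
  proof (rule ccontr)
    assume "\<not> 0 \<le> a \<bullet> x"
    then have "0 \<le> b / (a \<bullet> x)"
      using \<open>b < 0\<close> by (simp add: zero_le_divide_iff)
    then have "(b / (a \<bullet> x)) *\<^sub>R x \<in> ?K"
      using convex_cone_scaleR[OF convex_cone_convex_cone_hull _ that] by blast
    then have "b < a \<bullet> ((b / (a \<bullet> x)) *\<^sub>R x)"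
      using ab(2) by blast
    then show False
      using \<open>\<not> 0 \<le> a \<bullet> x\<close> by simp
  qed
  have "a \<noteq> 0"
    using ab(1) \<open>b < 0\<close> by auto
  then show ?thesis
    by (rule that) (rule nonneg[OF hull_inc])
qed

lemma zero_in_convex_hull_positive_weights:
  fixes W :: "'a::euclidean_space set"
  assumes "0 \<in> convex hull W"
  obtains T u where "T \<subseteq> W" "finite T" "T \<noteq> {}" "card T \<le> DIM('a) + 1"
    "\<forall>v\<in>T. 0 < u v" "(\<Sum>v\<in>T. u v *\<^sub>R v) = 0"
proof -
  obtain S u where S: "finite S" "S \<subseteq> W" "card S \<le> DIM('a) + 1" "\<forall>x\<in>S. 0 \<le> u x"
    "sum u S = 1" "(\<Sum>v\<in>S. u v *\<^sub>R v) = 0"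
    using assms unfolding convex_hull_caratheodory by blast
  define T where "T = {v\<in>S. u v \<noteq> 0}"
  have "T \<subseteq> S" "finite T"
    unfolding T_def using S(1) by auto
  moreover have "T \<noteq> {}"
    using S(5) unfolding T_def by (metis (mono_tags, lifting) empty_Collect_eq sum.neutral zero_neq_one)
  moreover have "card T \<le> DIM('a) + 1"
    using card_mono[OF S(1) \<open>T \<subseteq> S\<close>] S(3) by simp
  moreover have "\<forall>v\<in>T. 0 < u v"
    unfolding T_def using S(4) by force
  moreover have "(\<Sum>v\<in>T. u v *\<^sub>R v) = 0"
    using S(6) sum.mono_neutral_left[OF S(1) \<open>T \<subseteq> S\<close>, of "\<lambda>v. u v *\<^sub>R v"] unfolding T_def by auto
  ultimately show ?thesis
    using that S(2) by blast
qed

lemma two_sets_card_le_4_cases: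
  assumes "finite A" "finite B" "card A + card B \<le> 4"
  obtains "B = {}" | "A = {}" | b where "B = {b}" "A \<noteq> {}" | a where "A = {a}" "B \<noteq> {}"
    | a1 a2 b1 b2 where "A = {a1, a2}" "a1 \<noteq> a2" "B = {b1, b2}" "b1 \<noteq> b2"
proof (cases "A = {} \<or> B = {} \<or> (\<exists>a. A = {a}) \<or> (\<exists>b. B = {b})")
  case False
  then have "card A \<noteq> 0" "card A \<noteq> 1" "card B \<noteq> 0" "card B \<noteq> 1"
    using assms(1,2) by (auto simp: card_1_singleton_iff)
  then have "card A = 2" "card B = 2"
    using assms(3) by linarith+
  then show ?thesis
    using that(5) by (auto simp: card_2_iff)
qed (use that in blast)

section \<open>Reduced \<open>H\<^sup>0\<close> as connectivity\<close>

lemma rtranclp_sym: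
  assumes "\<And>x y. r x y \<Longrightarrow> r y x" "r\<^sup>*\<^sup>* a b"
  shows "r\<^sup>*\<^sup>* b a"
  using assms(2)
proof (induction rule: rtranclp_induct)
  case (step y z)
  show ?case
    using converse_rtranclp_into_rtranclp[OF assms(1)[OF step(2)] step(3)] .
qed simp

lemma connected_if_reduced_H0_vanishes:
  assumes H0: "reduced_H0_vanishes K TYPE('k::field)" and "{u} \<in> K" "{v} \<in> K"
  shows "(\<lambda>x y. {x, y} \<in> K)\<^sup>*\<^sup>* u v" (is "?E\<^sup>*\<^sup>* u v")
proof -
  \<comment> \<open>The indicator of the component of \<open>u\<close> is a 0-cocycle, hence constant.\<close>
  define f :: "_ \<Rightarrow> 'k" where "f x = (if ?E\<^sup>*\<^sup>* u x then 1 else 0)" for x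
  have "f x = f y" if "{x, y} \<in> K" for x y
  proof -
    have "?E x y" "?E y x"
      using that by (simp_all add: insert_commute)
    then have "?E\<^sup>*\<^sup>* u x \<longleftrightarrow> ?E\<^sup>*\<^sup>* u y"
      by (meson rtranclp.rtrancl_into_rtrancl)
    then show ?thesis
      unfolding f_def by simp
  qed
  then obtain c where "\<forall>x. {x} \<in> K \<longrightarrow> f x = c"
    using H0 unfolding reduced_H0_vanishes_def by blast
  then have "f v = f u"
    using \<open>{u} \<in> K\<close> \<open>{v} \<in> K\<close> by simp
  then show ?thesis
    unfolding f_def by (simp split: if_splits)
qed

lemma reduced_H0_vanishes_if_connected:
  assumes conn: "\<And>u v. {u} \<in> K \<Longrightarrow> {v} \<in> K \<Longrightarrow> (\<lambda>x y. {x, y} \<in> K)\<^sup>*\<^sup>* u v"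
  shows "reduced_H0_vanishes K TYPE('k::field)"
  unfolding reduced_H0_vanishes_def
proof (intro allI impI)
  fix f :: "_ \<Rightarrow> 'k"
  assume f: "\<forall>u v. {u, v} \<in> K \<longrightarrow> f u = f v"
  have const: "f u = f v" if "(\<lambda>x y. {x, y} \<in> K)\<^sup>*\<^sup>* u v" for u v
    using that by (induction rule: rtranclp_induct) (use f in auto)
  show "\<exists>c. \<forall>v. {v} \<in> K \<longrightarrow> f v = c"
  proof (cases "\<exists>u. {u} \<in> K")
    case True
    then obtain u where "{u} \<in> K"
      by blast
    then show ?thesis
      using conn const by blast
  qed simp
qed

lemma reduced_H0_vanishes_iff_connected:
  "reduced_H0_vanishes K TYPE('k::field) \<longleftrightarrow>
     (\<forall>u v. {u} \<in> K \<longrightarrow> {v} \<in> K \<longrightarrow> (\<lambda>x y. {x, y} \<in> K)\<^sup>*\<^sup>* u v)"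
  using connected_if_reduced_H0_vanishes reduced_H0_vanishes_if_connected by metis

section \<open>The cone \<open>\<sigma>\<close> and its rays\<close>

lemma abs_Ints_eq_nat:
  fixes x :: real
  assumes "x \<in> \<int>"
  obtains n :: nat where "\<bar>x\<bar> = real n"
proof -
  obtain z where "x = of_int z"
    using assms by (rule Ints_cases)
  then have "\<bar>x\<bar> = real (nat \<bar>z\<bar>)"
    by simp
  then show ?thesis
    using that by blast
qed

lemma integral_vec_diff: "integral_vec x \<Longrightarrow> integral_vec y \<Longrightarrow> integral_vec (x - y)"
  unfolding integral_vec_def by (simp add: Ints_diff)

lemma integral_vec_scale_nat: "integral_vec x \<Longrightarrow> integral_vec (real m *\<^sub>R x)"
  unfolding integral_vec_def by (simp add: Ints_mult)

locale cone3 =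
  fixes \<sigma> :: "(real^3) set"
  assumes scrp: "scrp_cone3 \<sigma>"
begin

abbreviation R where "R \<equiv> rays \<sigma>"

lemma nonzero_generators:
  obtains G where "finite G" "\<forall>g\<in>G. integral_vec g" "0 \<notin> G" "\<sigma> = convex_cone hull G"
proof -
  obtain G where G: "finite G" "\<forall>g\<in>G. integral_vec g" "\<sigma> = convex_cone hull G"
    using scrp unfolding scrp_cone3_def by blast
  have "convex_cone hull (G - {0}) = convex_cone hull G"
    by (metis convex_cone_hull_contains_0 hull_redundant insert_Diff_single)
  then show ?thesis
    using that[of "G - {0}"] G by simp
qed

lemma convex_cone_sigma: "convex_cone \<sigma>"
  using nonzero_generators by (metis convex_cone_convex_cone_hull)

lemma convex_sigma: "convex \<sigma>" and conic_sigma: "conic \<sigma>"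
  using convex_cone_sigma unfolding convex_cone_def by blast+

lemma zero_in_sigma: "0 \<in> \<sigma>"
  using nonzero_generators by (metis convex_cone_hull_contains_0)

lemma polyhedron_sigma: "polyhedron \<sigma>"
  using nonzero_generators by (metis polyhedron_convex_cone_hull)

lemma closed_sigma: "closed \<sigma>"
  by (rule polyhedron_imp_closed[OF polyhedron_sigma])

lemma aff_dim_sigma: "aff_dim \<sigma> = 3"
  using scrp unfolding scrp_cone3_def by blast

lemma sigma_neq_0: "\<sigma> \<noteq> {0}"
  using aff_dim_sigma by auto

lemma pointed: "x \<in> \<sigma> \<Longrightarrow> - x \<in> \<sigma> \<Longrightarrow> x = 0"
  using scrp unfolding scrp_cone3_def by (metis IntI image_eqI minus_minus singletonD)

lemma add_eq_0_imp_eq_0: "x \<in> \<sigma> \<Longrightarrow> y \<in> \<sigma> \<Longrightarrow> x + y = 0 \<Longrightarrow> x = 0"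
  by (metis add.inverse_unique pointed)

lemma sum_in_sigma: "finite A \<Longrightarrow> (\<And>i. i \<in> A \<Longrightarrow> f i \<in> \<sigma>) \<Longrightarrow> sum f A \<in> \<sigma>"
  by (induction A rule: finite_induct) (auto intro: convex_cone_add[OF convex_cone_sigma] zero_in_sigma)

lemma zero_notin_convex_hull:
  assumes "finite G" "G \<subseteq> \<sigma> - {0}"
  shows "0 \<notin> convex hull G"
proof
  assume "0 \<in> convex hull G"
  then obtain u where u: "\<forall>x\<in>G. 0 \<le> u x" "sum u G = 1" "(\<Sum>x\<in>G. u x *\<^sub>R x) = 0"
    unfolding convex_hull_finite[OF assms(1)] by blast
  obtain g where g: "g \<in> G" "u g \<noteq> 0"
    using u(2) by (metis sum.neutral zero_neq_one)
  have in_sigma: "u x *\<^sub>R x \<in> \<sigma>" if "x \<in> G" for x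
    using that u(1) assms(2) convex_cone_scaleR[OF convex_cone_sigma] by blast
  have "(\<Sum>x\<in>G - {g}. u x *\<^sub>R x) \<in> \<sigma>"
    using assms(1) in_sigma by (intro sum_in_sigma) auto
  moreover have "u g *\<^sub>R g + (\<Sum>x\<in>G - {g}. u x *\<^sub>R x) = 0"
    using u(3) sum.remove[OF assms(1) g(1), of "\<lambda>x. u x *\<^sub>R x"] by simp
  ultimately have "u g *\<^sub>R g = 0"
    using add_eq_0_imp_eq_0 in_sigma[OF g(1)] by blast
  then show False
    using g assms(2) by auto
qed

lemma strictly_positive_functional_exists:
  "\<exists>u K. (\<forall>x\<in>\<sigma>. x \<noteq> 0 \<longrightarrow> 0 < u \<bullet> x) \<and> (\<forall>x\<in>\<sigma>. norm x \<le> K * (u \<bullet> x))"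
proof -
  obtain G where G: "finite G" "0 \<notin> G" "\<sigma> = convex_cone hull G"
    using nonzero_generators by blast
  have "G \<noteq> {}"
    using sigma_neq_0 unfolding G(3) by (metis convex_cone_hull_empty)
  then have \<sigma>_eq: "\<sigma> = conic hull (convex hull G)"
    unfolding G(3) by (rule convex_cone_hull_separate_nonempty)
  have "G \<subseteq> \<sigma>"
    unfolding G(3) by (rule hull_subset)
  then have "0 \<notin> convex hull G"
    using zero_notin_convex_hull G(1,2) by blast
  moreover have cpt: "compact (convex hull G)"
    using G(1) by (rule finite_imp_compact_convex_hull)
  ultimately obtain a b where ab: "0 < b" "\<forall>z\<in>convex hull G. b < a \<bullet> z"
    using separating_hyperplane_closed_0[OF convex_convex_hull compact_imp_closed[OF cpt]] by blast
  obtain M where M: "0 < M" "\<forall>z\<in>convex hull G. norm z \<le> M"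
    using compact_imp_bounded[OF cpt] unfolding bounded_pos by blast
  have bound: "norm z \<le> (M / b) * (a \<bullet> z)" if "z \<in> convex hull G" for z
  proof -
    have "norm z \<le> (M / b) * b"
      using M(2) that ab(1) by simp
    also have "\<dots> \<le> (M / b) * (a \<bullet> z)"
      using ab M(1) that by (intro mult_left_mono) auto
    finally show ?thesis .
  qed
  have "(x \<noteq> 0 \<longrightarrow> 0 < a \<bullet> x) \<and> norm x \<le> (M / b) * (a \<bullet> x)" if "x \<in> \<sigma>" for x
  proof -
    obtain c z where cz: "0 \<le> c" "z \<in> convex hull G" "x = c *\<^sub>R z"
      using \<open>x \<in> \<sigma>\<close> unfolding \<sigma>_eq conic_hull_explicit by blast
    have "0 < a \<bullet> z"
      using ab cz(2) by fastforce
    moreover have "norm x = c * norm z" "a \<bullet> x = c * (a \<bullet> z)"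
      using cz(1,3) by simp_all
    moreover have "c * norm z \<le> (M / b) * (c * (a \<bullet> z))"
      using mult_left_mono[OF bound[OF cz(2)] cz(1)] by (simp only: mult.left_commute)
    ultimately show ?thesis
      using cz(1,3) by (auto simp: zero_less_mult_iff)
  qed
  then show ?thesis
    by blast
qed

definition height :: "real^3" where
  "height = (SOME u. \<exists>K. (\<forall>x\<in>\<sigma>. x \<noteq> 0 \<longrightarrow> 0 < u \<bullet> x) \<and> (\<forall>x\<in>\<sigma>. norm x \<le> K * (u \<bullet> x)))"

lemma height: "\<exists>K. (\<forall>x\<in>\<sigma>. x \<noteq> 0 \<longrightarrow> 0 < height \<bullet> x) \<and> (\<forall>x\<in>\<sigma>. norm x \<le> K * (height \<bullet> x))"
  unfolding height_def by (rule someI_ex) (rule strictly_positive_functional_exists)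

lemma height_pos: "x \<in> \<sigma> \<Longrightarrow> x \<noteq> 0 \<Longrightarrow> 0 < height \<bullet> x"
  using height by blast

lemma height_nonneg: "x \<in> \<sigma> \<Longrightarrow> 0 \<le> height \<bullet> x"
  using height_pos[of x] by (cases "x = 0") auto

lemma ray_face: "\<rho> \<in> R \<Longrightarrow> \<rho> face_of \<sigma>" and ray_aff_dim: "\<rho> \<in> R \<Longrightarrow> aff_dim \<rho> = 1"
  unfolding rays_def by auto

lemma ray_subset: "\<rho> \<in> R \<Longrightarrow> \<rho> \<subseteq> \<sigma>"
  using ray_face face_of_imp_subset by blast

lemma ray_neq_sigma:
  assumes "\<rho> \<in> R"
  shows "\<rho> \<noteq> \<sigma>"
proof
  assume "\<rho> = \<sigma>"
  then have "aff_dim \<sigma> = 1"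
    using ray_aff_dim[OF assms] by simp
  then show False
    using aff_dim_sigma by simp
qed

lemma finite_rays: "finite R"
proof (rule finite_subset)
  show "R \<subseteq> {F. F face_of \<sigma>}"
    unfolding rays_def by blast
qed (rule finite_polyhedron_faces[OF polyhedron_sigma])

lemma ray_has_nonzero:
  assumes "\<rho> \<in> R"
  shows "\<exists>v\<in>\<rho>. v \<noteq> 0"
proof (rule ccontr)
  assume "\<not> (\<exists>v\<in>\<rho>. v \<noteq> 0)"
  then have "\<rho> \<subseteq> {0}"
    by blast
  then have "\<rho> = {} \<or> \<rho> = {0}"
    by (rule subset_singletonD)
  then show False
    using ray_aff_dim[OF assms] by (elim disjE) simp_all
qed

lemma conic_ray: "\<rho> \<in> R \<Longrightarrow> conic \<rho>"
  using face_of_conic[OF conic_sigma ray_face] .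

lemma zero_in_ray: "\<rho> \<in> R \<Longrightarrow> 0 \<in> \<rho>"
  using conic_contains_0[OF conic_ray] ray_has_nonzero by fast

lemma ray_eq:
  assumes "\<rho> \<in> R" "v \<in> \<rho>" "v \<noteq> 0"
  shows "\<rho> = {t *\<^sub>R v | t. 0 \<le> t}"
proof
  show "{t *\<^sub>R v | t. 0 \<le> t} \<subseteq> \<rho>"
    using conic_ray[OF assms(1)] assms(2) conic_mul by blast
  show "\<rho> \<subseteq> {t *\<^sub>R v | t. 0 \<le> t}"
  proof
    fix y assume "y \<in> \<rho>"
    have "collinear \<rho>"
      using ray_aff_dim[OF assms(1)] by (simp add: collinear_aff_dim)
    moreover have "{0, v, y} \<subseteq> \<rho>"
      using zero_in_ray[OF assms(1)] assms(2) \<open>y \<in> \<rho>\<close> by blast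
    ultimately have "collinear {0, v, y}"
      by (rule collinear_subset)
    then have "y = 0 \<or> (\<exists>c. y = c *\<^sub>R v)"
      using assms(3) collinear_lemma by blast
    then obtain c where c: "y = c *\<^sub>R v"
      by (metis scale_zero_left)
    have "0 \<le> c"
    proof (rule ccontr)
      assume "\<not> 0 \<le> c"
      then have "- v = (- 1 / c) *\<^sub>R y"
        using c by simp
      moreover have "(- 1 / c) *\<^sub>R y \<in> \<sigma>"
        using \<open>\<not> 0 \<le> c\<close> \<open>y \<in> \<rho>\<close> ray_subset[OF assms(1)]
        by (intro conic_mul[OF conic_sigma]) auto
      moreover have "v \<in> \<sigma>"
        using ray_subset[OF assms(1)] assms(2) by blast
      ultimately show False
        using pointed[of v] assms(3) by simp
    qed
    then show "y \<in> {t *\<^sub>R v | t. 0 \<le> t}"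
      using c by blast
  qed
qed

lemma face_exposed:
  assumes "F face_of \<sigma>" "0 \<in> F"
  obtains f where "\<forall>x\<in>\<sigma>. 0 \<le> f \<bullet> x" "F = \<sigma> \<inter> {x. f \<bullet> x = 0}"
proof -
  obtain a b where "\<sigma> \<subseteq> {x. a \<bullet> x \<le> b}" "F = \<sigma> \<inter> {x. a \<bullet> x = b}"
    using assms(1) exposed_face_of_polyhedron[OF polyhedron_sigma] unfolding exposed_face_of_def
    by blast
  moreover have "b = 0"
    using assms(2) calculation(2) by auto
  ultimately show ?thesis
    using that[of "- a"] by auto
qed

lemma ray_has_integral_point:
  assumes "\<rho> \<in> R"
  shows "\<exists>g\<in>\<rho>. g \<noteq> 0 \<and> integral_vec g"
proof (rule ccontr)
  assume none: "\<not> ?thesis"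
  obtain G where G: "finite G" "\<forall>g\<in>G. integral_vec g" "0 \<notin> G" "\<sigma> = convex_cone hull G"
    using nonzero_generators by blast
  obtain f where f: "\<forall>x\<in>\<sigma>. 0 \<le> f \<bullet> x" "\<rho> = \<sigma> \<inter> {x. f \<bullet> x = 0}"
    using face_exposed[OF ray_face[OF assms] zero_in_ray[OF assms]] by blast
  have "G \<subseteq> {x. 0 < f \<bullet> x}"
  proof
    fix g assume "g \<in> G"
    then have "g \<in> \<sigma>"
      unfolding G(4) by (rule hull_inc)
    moreover have "g \<notin> \<rho>"
      using none \<open>g \<in> G\<close> G(2,3) by metis
    ultimately have "f \<bullet> g \<noteq> 0"
      unfolding f(2) by blast
    moreover have "0 \<le> f \<bullet> g"
      using f(1) \<open>g \<in> \<sigma>\<close> by blast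
    ultimately show "g \<in> {x. 0 < f \<bullet> x}"
      by simp
  qed
  then have pos: "convex hull G \<subseteq> {x. 0 < f \<bullet> x}"
    by (rule hull_minimal) (rule convex_halfspace_gt)
  obtain v where v: "v \<in> \<rho>" "v \<noteq> 0"
    using ray_has_nonzero[OF assms] by blast
  then have "v \<in> \<sigma>" "f \<bullet> v = 0"
    using f(2) by blast+
  have "v \<in> insert 0 (conic hull (convex hull G))"
    using \<open>v \<in> \<sigma>\<close> unfolding G(4) convex_cone_hull_separate .
  then obtain c z where cz: "v = c *\<^sub>R z" "0 \<le> c" "z \<in> convex hull G"
    unfolding conic_hull_explicit using v(2) by blast
  then have "c * (f \<bullet> z) = 0" "0 < f \<bullet> z"
    using \<open>f \<bullet> v = 0\<close> pos by auto
  then show False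
    using cz(1) v(2) by simp
qed

definition primitive :: "(real^3) set \<Rightarrow> real^3 \<Rightarrow> bool" where
  "primitive \<rho> v \<longleftrightarrow> v \<in> \<rho> \<and> v \<noteq> 0 \<and> integral_vec v \<and>
     (\<forall>w\<in>\<rho>. integral_vec w \<longrightarrow> (\<exists>m::nat. w = of_nat m *\<^sub>R v))"

lemma integral_points_of_ray:
  assumes "\<rho> \<in> R" "g \<in> \<rho>" "g \<noteq> 0" "integral_vec g"
  obtains a :: nat where "0 < a"
    "\<And>w. w \<in> \<rho> \<Longrightarrow> integral_vec w \<Longrightarrow> \<exists>k::nat. w = (real k / real a) *\<^sub>R g"
proof -
  obtain i where i: "g $ i \<noteq> 0"
    using assms(3) by (auto simp: vec_eq_iff)
  obtain a :: nat where a: "\<bar>g $ i\<bar> = real a"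
    using assms(4) abs_Ints_eq_nat unfolding integral_vec_def by blast
  have "\<exists>k::nat. w = (real k / real a) *\<^sub>R g" if "w \<in> \<rho>" "integral_vec w" for w
  proof -
    obtain t where t: "0 \<le> t" "w = t *\<^sub>R g"
      using ray_eq[OF assms(1-3)] \<open>w \<in> \<rho>\<close> by blast
    obtain k :: nat where k: "\<bar>w $ i\<bar> = real k"
      using \<open>integral_vec w\<close> abs_Ints_eq_nat unfolding integral_vec_def by blast
    have "real k = t * real a"
      using k a t by (simp add: abs_mult)
    then have "t = real k / real a"
      using a i by simp
    then show ?thesis
      using t(2) by blast
  qed
  moreover have "0 < a"
    using a i by simp
  ultimately show ?thesis
    using that by blast
qed

lemma primitive_exists:
  assumes "\<rho> \<in> R"
  shows "\<exists>v. primitive \<rho> v"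
proof -
  obtain g where g: "g \<in> \<rho>" "g \<noteq> 0" "integral_vec g"
    using ray_has_integral_point[OF assms] by blast
  obtain a :: nat where a: "0 < a"
    and multiples: "\<And>w. w \<in> \<rho> \<Longrightarrow> integral_vec w \<Longrightarrow> \<exists>k::nat. w = (real k / real a) *\<^sub>R g"
    using integral_points_of_ray[OF assms g] by blast
  define Q where "Q k \<longleftrightarrow> 0 < k \<and> integral_vec ((real k / real a) *\<^sub>R g)" for k
  have "Q a"
    unfolding Q_def using a g(3) by simp
  define k0 where "k0 = (LEAST k. Q k)"
  have "Q k0"
    unfolding k0_def using \<open>Q a\<close> by (rule LeastI)
  define v where "v = (real k0 / real a) *\<^sub>R g"
  have "v \<in> \<rho>"
    unfolding v_def using conic_ray[OF assms] g(1) by (simp add: conic_mul)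
  moreover have "v \<noteq> 0" "integral_vec v"
    using \<open>Q k0\<close> a g(2) unfolding Q_def v_def by auto
  moreover have "\<exists>m::nat. w = real m *\<^sub>R v" if w: "w \<in> \<rho>" "integral_vec w" for w
  proof -
    obtain k :: nat where k: "w = (real k / real a) *\<^sub>R g"
      using multiples[OF w] by blast
    define q r where "q = k div k0" and "r = k mod k0"
    have "k = q * k0 + r"
      unfolding q_def r_def by simp
    then have w_eq: "w = real q *\<^sub>R v + (real r / real a) *\<^sub>R g"
      unfolding k v_def by (simp add: algebra_simps add_divide_distrib)
    have "(real r / real a) *\<^sub>R g = w - real q *\<^sub>R v"
      using w_eq by simp
    then have "integral_vec ((real r / real a) *\<^sub>R g)"
      using integral_vec_diff[OF \<open>integral_vec w\<close> integral_vec_scale_nat[OF \<open>integral_vec v\<close>]]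
      by simp
    moreover have "r < k0"
      unfolding r_def using \<open>Q k0\<close> unfolding Q_def by simp
    then have "\<not> Q r"
      unfolding k0_def by (rule not_less_Least)
    ultimately have "r = 0"
      unfolding Q_def by simp
    then show ?thesis
      using w_eq by auto
  qed
  ultimately show ?thesis
    unfolding primitive_def by blast
qed

lemma primitive_unique:
  assumes "primitive \<rho> v" "primitive \<rho> v'"
  shows "v = v'"
proof -
  obtain m m' :: nat where m: "v' = real m *\<^sub>R v" "v = real m' *\<^sub>R v'"
    using assms unfolding primitive_def by blast
  have "v = (real m' * real m) *\<^sub>R v"
    using m(2) unfolding m(1) scaleR_scaleR .
  then have "real m' * real m = 1"
    using assms(1) unfolding primitive_def by (metis scaleR_cancel_right scaleR_one)
  then have "m = 1"
    by (metis of_nat_1 of_nat_eq_iff of_nat_mult nat_mult_eq_1_iff)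
  then show ?thesis
    using m(1) by simp
qed

lemma prim_gen_primitive: "\<rho> \<in> R \<Longrightarrow> primitive \<rho> (prim_gen \<rho>)"
  unfolding prim_gen_def primitive_def[symmetric]
  using primitive_exists primitive_unique by (metis theI')

lemma prim_gen_in_ray: "\<rho> \<in> R \<Longrightarrow> prim_gen \<rho> \<in> \<rho>"
  and prim_gen_nonzero: "\<rho> \<in> R \<Longrightarrow> prim_gen \<rho> \<noteq> 0"
  using prim_gen_primitive unfolding primitive_def by blast+

lemma prim_gen_in_sigma: "\<rho> \<in> R \<Longrightarrow> prim_gen \<rho> \<in> \<sigma>"
  using prim_gen_in_ray ray_subset by blast

lemma height_prim_gen_pos: "\<rho> \<in> R \<Longrightarrow> 0 < height \<bullet> prim_gen \<rho>"
  using height_pos prim_gen_in_sigma prim_gen_nonzero by blast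

lemma in_ray_iff: "\<rho> \<in> R \<Longrightarrow> x \<in> \<rho> \<longleftrightarrow> (\<exists>t\<ge>0. x = t *\<^sub>R prim_gen \<rho>)"
  using ray_eq[OF _ prim_gen_in_ray prim_gen_nonzero] by blast

lemma ray_eq_if_prim_gen_in:
  assumes "\<rho> \<in> R" "\<rho>' \<in> R" "prim_gen \<rho>' \<in> \<rho>"
  shows "\<rho> = \<rho>'"
proof -
  have "prim_gen \<rho>' \<noteq> 0"
    using prim_gen_nonzero[OF assms(2)] .
  then have "\<rho> = {t *\<^sub>R prim_gen \<rho>' | t. 0 \<le> t}" "\<rho>' = {t *\<^sub>R prim_gen \<rho>' | t. 0 \<le> t}"
    using ray_eq assms prim_gen_in_ray by blast+
  then show ?thesis
    by (rule trans[OF _ sym])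
qed

lemma prim_gen_inj: "\<rho> \<in> R \<Longrightarrow> \<rho>' \<in> R \<Longrightarrow> prim_gen \<rho> = prim_gen \<rho>' \<Longrightarrow> \<rho> = \<rho>'"
  using ray_eq_if_prim_gen_in prim_gen_in_ray by metis

lemma neg_prim_gen_neq: "\<rho> \<in> R \<Longrightarrow> \<rho>' \<in> R \<Longrightarrow> - prim_gen \<rho> \<noteq> prim_gen \<rho>'"
  using add_eq_0_imp_eq_0[OF prim_gen_in_sigma prim_gen_in_sigma] prim_gen_nonzero
  by (metis add.left_inverse)

section \<open>Generation by rays and exposing functionals\<close>

abbreviation slice :: "(real^3) set" where
  "slice \<equiv> \<sigma> \<inter> {x. height \<bullet> x = 1}"

lemma bounded_slice: "bounded slice"
proof -
  obtain K where "\<forall>x\<in>\<sigma>. norm x \<le> K * (height \<bullet> x)"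
    using height by blast
  then show ?thesis
    unfolding bounded_iff by (intro exI[of _ K]) auto
qed

lemma normalize_in_slice:
  assumes "x \<in> \<sigma>" "x \<noteq> 0"
  shows "(1 / (height \<bullet> x)) *\<^sub>R x \<in> slice"
  using height_pos[OF assms] conic_mul[OF conic_sigma assms(1)] by simp

lemma exposing_functional_of_extreme_point:
  assumes e: "e extreme_point_of slice"
  obtains \<phi> where "\<forall>x\<in>\<sigma>. 0 \<le> \<phi> \<bullet> x" "\<And>x. x \<in> \<sigma> \<Longrightarrow> \<phi> \<bullet> x = 0 \<longleftrightarrow> (\<exists>t\<ge>0. x = t *\<^sub>R e)"
proof -
  have e_slice: "e \<in> \<sigma>" "height \<bullet> e = 1"
    using e unfolding extreme_point_of_def by auto
  have "polyhedron slice"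
    using polyhedron_sigma polyhedron_hyperplane by (rule polyhedron_Int)
  then have "{e} exposed_face_of slice"
    using e exposed_face_of_polyhedron face_of_singleton by blast
  then obtain l c where l: "slice \<subseteq> {x. l \<bullet> x \<le> c}" "{e} = slice \<inter> {x. l \<bullet> x = c}"
    unfolding exposed_face_of_def by blast
  \<comment> \<open>Homogenise the functional \<open>c - l\<close> exposing \<open>e\<close> in the slice.\<close>
  define \<phi> where "\<phi> = c *\<^sub>R height - l"
  have "0 \<le> \<phi> \<bullet> x \<and> (\<phi> \<bullet> x = 0 \<longleftrightarrow> (\<exists>t\<ge>0. x = t *\<^sub>R e))" if "x \<in> \<sigma>" for x
  proof (cases "x = 0")
    case False
    define h where "h = height \<bullet> x"
    define y where "y = (1 / h) *\<^sub>R x"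
    have "0 < h" "y \<in> slice"
      unfolding h_def y_def using height_pos normalize_in_slice that False by auto
    have x_eq: "x = h *\<^sub>R y"
      unfolding y_def using \<open>0 < h\<close> by simp
    have "\<phi> \<bullet> x = h * (c - l \<bullet> y)"
      unfolding \<phi>_def x_eq using \<open>y \<in> slice\<close> by (simp add: inner_diff_left algebra_simps)
    moreover have "(\<exists>t\<ge>0. x = t *\<^sub>R e) \<longleftrightarrow> y = e"
    proof
      assume "\<exists>t\<ge>0. x = t *\<^sub>R e"
      then obtain t where "x = t *\<^sub>R e"
        by blast
      then have "h = t"
        unfolding h_def using e_slice by simp
      then show "y = e"
        unfolding y_def using \<open>x = t *\<^sub>R e\<close> \<open>0 < h\<close> by simp
    qed (use x_eq \<open>0 < h\<close> less_imp_le in blast)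
    moreover have "l \<bullet> y \<le> c" "y = e \<longleftrightarrow> l \<bullet> y = c"
      using l \<open>y \<in> slice\<close> by blast+
    ultimately show ?thesis
      using \<open>0 < h\<close> by auto
  qed auto
  then show ?thesis
    using that by blast
qed

lemma extreme_point_of_slice_spans_ray:
  assumes e: "e extreme_point_of slice"
  shows "{t *\<^sub>R e | t. 0 \<le> t} \<in> R"
proof -
  define T where "T = {t *\<^sub>R e | t. 0 \<le> t}"
  obtain \<phi> where \<phi>: "\<forall>x\<in>\<sigma>. 0 \<le> \<phi> \<bullet> x" "\<And>x. x \<in> \<sigma> \<Longrightarrow> \<phi> \<bullet> x = 0 \<longleftrightarrow> (\<exists>t\<ge>0. x = t *\<^sub>R e)"
    using exposing_functional_of_extreme_point[OF e] by blast
  have e_slice: "e \<in> \<sigma>" "height \<bullet> e = 1"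
    using e unfolding extreme_point_of_def by auto
  then have "T \<subseteq> \<sigma>"
    unfolding T_def using conic_mul[OF conic_sigma] by blast
  then have "T = \<sigma> \<inter> {x. \<phi> \<bullet> x = 0}"
    using \<phi>(2) unfolding T_def by blast
  then have "T face_of \<sigma>"
    using face_of_Int_supporting_hyperplane_ge[OF convex_sigma, where a=\<phi> and b=0] \<phi>(1) by simp
  moreover have "aff_dim T = 1"
  proof -
    have "collinear T"
      unfolding collinear_alt T_def by (intro exI[of _ 0] exI[of _ e]) auto
    moreover have "{0, e} \<subseteq> T"
      unfolding T_def by (auto intro: exI[of _ 0] exI[of _ 1])
    moreover have "e \<noteq> 0"
      using e_slice by auto
    ultimately show ?thesis
      using aff_dim_subset[of "{0, e}" T] collinear_aff_dim[of T] by simp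
  qed
  ultimately show ?thesis
    unfolding rays_def T_def by blast
qed

lemma slice_subset_convex_cone_hull_prim_gen: "slice \<subseteq> convex_cone hull (prim_gen ` R)"
proof -
  let ?H = "convex_cone hull (prim_gen ` R)"
  have "{x. x extreme_point_of slice} \<subseteq> ?H"
  proof
    fix e assume "e \<in> {x. x extreme_point_of slice}"
    then have ray: "{t *\<^sub>R e | t. 0 \<le> t} \<in> R" (is "?T \<in> R")
      using extreme_point_of_slice_spans_ray by blast
    define p where "p = prim_gen ?T"
    obtain t where t: "0 \<le> t" "p = t *\<^sub>R e"
      using prim_gen_in_ray[OF ray] unfolding p_def by blast
    then have "t \<noteq> 0"
      using prim_gen_nonzero[OF ray] unfolding p_def by auto
    have "p \<in> ?H"
      unfolding p_def using ray by (intro hull_inc) blast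
    then have "(1 / t) *\<^sub>R p \<in> ?H"
      using t(1) by (intro convex_cone_scaleR[OF convex_cone_convex_cone_hull]) auto
    then show "e \<in> ?H"
      using t(2) \<open>t \<noteq> 0\<close> by simp
  qed
  moreover have "compact slice"
    using bounded_slice closed_sigma closed_hyperplane compact_eq_bounded_closed by blast
  moreover have "convex slice"
    using convex_sigma convex_hyperplane by (rule convex_Int)
  ultimately show ?thesis
    using Krein_Milman_Minkowski convex_convex_cone_hull hull_minimal by metis
qed

lemma sigma_subset_convex_cone_hull_prim_gen: "\<sigma> \<subseteq> convex_cone hull (prim_gen ` R)"
proof
  fix x assume "x \<in> \<sigma>"
  let ?H = "convex_cone hull (prim_gen ` R)"
  show "x \<in> ?H"
  proof (cases "x = 0")
    case False
    then have "(1 / (height \<bullet> x)) *\<^sub>R x \<in> ?H"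
      using slice_subset_convex_cone_hull_prim_gen normalize_in_slice \<open>x \<in> \<sigma>\<close> by blast
    then have "(height \<bullet> x) *\<^sub>R ((1 / (height \<bullet> x)) *\<^sub>R x) \<in> ?H"
      using height_nonneg[OF \<open>x \<in> \<sigma>\<close>] convex_cone_scaleR[OF convex_cone_convex_cone_hull] by blast
    then show ?thesis
      using height_pos[OF \<open>x \<in> \<sigma>\<close> False] by simp
  qed (simp add: convex_cone_hull_contains_0)
qed

lemma nonneg_on_sigma_if_nonneg_on_rays:
  assumes "\<forall>\<rho>\<in>R. 0 \<le> u \<bullet> prim_gen \<rho>" "x \<in> \<sigma>"
  shows "0 \<le> u \<bullet> x"
proof -
  have "convex_cone hull (prim_gen ` R) \<subseteq> {x. 0 \<le> u \<bullet> x}"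
    using assms(1) by (intro hull_minimal convex_cone_halfspace_ge) auto
  then show ?thesis
    using assms(2) sigma_subset_convex_cone_hull_prim_gen by blast
qed

lemma eq_0_if_orthogonal_to_rays:
  assumes "\<forall>\<rho>\<in>R. u \<bullet> prim_gen \<rho> = 0"
  shows "u = 0"
proof (rule ccontr)
  assume "u \<noteq> 0"
  have "0 \<le> u \<bullet> x" "0 \<le> (- u) \<bullet> x" if "x \<in> \<sigma>" for x
    using assms that nonneg_on_sigma_if_nonneg_on_rays[of u x] nonneg_on_sigma_if_nonneg_on_rays[of "- u" x]
    by simp_all
  then have "\<sigma> \<subseteq> {x. u \<bullet> x = 0}"
    by fastforce
  then have "aff_dim \<sigma> \<le> aff_dim {x. u \<bullet> x = 0}"
    by (rule aff_dim_subset)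
  then show False
    using \<open>u \<noteq> 0\<close> aff_dim_sigma by simp
qed

lemma rays_nonempty: "R \<noteq> {}"
proof
  assume "R = {}"
  then have "\<sigma> \<subseteq> {0}"
    using sigma_subset_convex_cone_hull_prim_gen by simp
  then show False
    using sigma_neq_0 zero_in_sigma by blast
qed

definition exposer :: "(real^3) set \<Rightarrow> real^3" where
  "exposer \<rho> = (SOME f. (\<forall>x\<in>\<sigma>. 0 \<le> f \<bullet> x) \<and> \<rho> = \<sigma> \<inter> {x. f \<bullet> x = 0})"

lemma exposer:
  assumes "\<rho> \<in> R"
  shows "\<forall>x\<in>\<sigma>. 0 \<le> exposer \<rho> \<bullet> x" "\<rho> = \<sigma> \<inter> {x. exposer \<rho> \<bullet> x = 0}"
proof -
  obtain f where "\<forall>x\<in>\<sigma>. 0 \<le> f \<bullet> x" "\<rho> = \<sigma> \<inter> {x. f \<bullet> x = 0}"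
    using face_exposed[OF ray_face[OF assms] zero_in_ray[OF assms]] by blast
  then have "(\<forall>x\<in>\<sigma>. 0 \<le> exposer \<rho> \<bullet> x) \<and> \<rho> = \<sigma> \<inter> {x. exposer \<rho> \<bullet> x = 0}"
    unfolding exposer_def by (intro someI[where P = "\<lambda>f. (\<forall>x\<in>\<sigma>. 0 \<le> f \<bullet> x) \<and> \<rho> = \<sigma> \<inter> {x. f \<bullet> x = 0}"]) blast
  then show "\<forall>x\<in>\<sigma>. 0 \<le> exposer \<rho> \<bullet> x" "\<rho> = \<sigma> \<inter> {x. exposer \<rho> \<bullet> x = 0}"
    by blast+
qed

lemma exposer_nonneg: "\<rho> \<in> R \<Longrightarrow> x \<in> \<sigma> \<Longrightarrow> 0 \<le> exposer \<rho> \<bullet> x"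
  using exposer(1) by blast

lemma exposer_prim_gen: "\<rho> \<in> R \<Longrightarrow> exposer \<rho> \<bullet> prim_gen \<rho> = 0"
  using exposer(2) prim_gen_in_ray by blast

lemma exposer_pos:
  assumes "\<rho> \<in> R" "\<rho>' \<in> R" "\<rho>' \<noteq> \<rho>"
  shows "0 < exposer \<rho> \<bullet> prim_gen \<rho>'"
proof -
  have "prim_gen \<rho>' \<notin> \<rho>"
    using ray_eq_if_prim_gen_in assms by blast
  then have "exposer \<rho> \<bullet> prim_gen \<rho>' \<noteq> 0"
    using exposer(2)[OF assms(1)] prim_gen_in_sigma[OF assms(2)] by blast
  then show ?thesis
    using exposer_nonneg[OF assms(1) prim_gen_in_sigma[OF assms(2)]] by simp
qed

lemma prim_gen_cross_nonzero:
  assumes "\<rho> \<in> R" "\<rho>' \<in> R" "\<rho>' \<noteq> \<rho>"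
  shows "prim_gen \<rho> \<times> prim_gen \<rho>' \<noteq> 0"
proof
  assume "prim_gen \<rho> \<times> prim_gen \<rho>' = 0"
  then obtain c where "prim_gen \<rho>' = c *\<^sub>R prim_gen \<rho>"
    using prim_gen_nonzero[OF assms(1)] prim_gen_nonzero[OF assms(2)]
    unfolding cross_eq_0 collinear_lemma by blast
  then have "exposer \<rho> \<bullet> prim_gen \<rho>' = 0"
    using exposer_prim_gen[OF assms(1)] by simp
  then show False
    using exposer_pos[OF assms] by simp
qed

lemma prim_gen_triple_nonzero:
  assumes "a \<in> R" "b \<in> R" "c \<in> R" "a \<noteq> b" "a \<noteq> c" "b \<noteq> c"
  shows "prim_gen a \<bullet> (prim_gen b \<times> prim_gen c) \<noteq> 0"
proof
  assume "prim_gen a \<bullet> (prim_gen b \<times> prim_gen c) = 0"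
  then obtain \<beta> \<delta> where a_eq: "prim_gen a = \<beta> *\<^sub>R prim_gen b + \<delta> *\<^sub>R prim_gen c"
    using in_plane_if_triple_eq_0 prim_gen_cross_nonzero[OF assms(2,3)] assms(6) by metis
  have "exposer b \<bullet> prim_gen a = \<delta> * (exposer b \<bullet> prim_gen c)"
    using a_eq exposer_prim_gen[OF assms(2)] by (simp add: inner_add_right)
  then have "0 < \<delta>"
    using exposer_pos[of b a] exposer_pos[of b c] assms by (simp add: zero_less_mult_iff)
  have "exposer c \<bullet> prim_gen a = \<beta> * (exposer c \<bullet> prim_gen b)"
    using a_eq exposer_prim_gen[OF assms(3)] by (simp add: inner_add_right)
  then have "0 < \<beta>"
    using exposer_pos[of c a] exposer_pos[of c b] assms by (simp add: zero_less_mult_iff)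
  have "exposer a \<bullet> prim_gen a = \<beta> * (exposer a \<bullet> prim_gen b) + \<delta> * (exposer a \<bullet> prim_gen c)"
    using a_eq by (simp add: inner_add_right)
  then have "0 < exposer a \<bullet> prim_gen a"
    using \<open>0 < \<beta>\<close> \<open>0 < \<delta>\<close> exposer_pos[of a b] exposer_pos[of a c] assms by (simp add: add_pos_pos)
  then show False
    using exposer_prim_gen[OF assms(1)] by simp
qed

section \<open>Adjacency of rays\<close>

definition adjacent :: "(real^3) set \<Rightarrow> (real^3) set \<Rightarrow> bool" where
  "adjacent \<rho> \<rho>' \<longleftrightarrow> (\<exists>F. F face_of \<sigma> \<and> F \<noteq> \<sigma> \<and> \<rho> \<subseteq> F \<and> \<rho>' \<subseteq> F)"

definition adjacent_in :: "(real^3) set set \<Rightarrow> (real^3) set \<Rightarrow> (real^3) set \<Rightarrow> bool" where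
  "adjacent_in P \<rho> \<rho>' \<longleftrightarrow> \<rho> \<in> P \<and> \<rho>' \<in> P \<and> adjacent \<rho> \<rho>'"

lemma adjacent_refl: "\<rho> \<in> R \<Longrightarrow> adjacent \<rho> \<rho>"
  unfolding adjacent_def using ray_face ray_neq_sigma by blast

lemma adjacent_sym: "adjacent \<rho> \<rho>' \<Longrightarrow> adjacent \<rho>' \<rho>"
  unfolding adjacent_def by blast

lemma adjacent_in_sym: "adjacent_in P \<rho> \<rho>' \<Longrightarrow> adjacent_in P \<rho>' \<rho>"
  unfolding adjacent_in_def using adjacent_sym by blast

lemma supporting_functional_if_adjacent:
  assumes "adjacent \<rho> \<rho>'" "\<rho> \<in> R" "\<rho>' \<in> R"
  obtains u where "u \<noteq> 0" "\<forall>x\<in>\<sigma>. 0 \<le> u \<bullet> x" "u \<bullet> prim_gen \<rho> = 0" "u \<bullet> prim_gen \<rho>' = 0"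
proof -
  obtain F where F: "F face_of \<sigma>" "F \<noteq> \<sigma>" "\<rho> \<subseteq> F" "\<rho>' \<subseteq> F"
    using assms(1) unfolding adjacent_def by blast
  moreover have "0 \<in> F"
    using zero_in_ray[OF assms(2)] F(3) by blast
  ultimately obtain u where u: "\<forall>x\<in>\<sigma>. 0 \<le> u \<bullet> x" "F = \<sigma> \<inter> {x. u \<bullet> x = 0}"
    using face_exposed by blast
  have "u \<noteq> 0"
    using u(2) F(2) by auto
  moreover have "prim_gen \<rho> \<in> F" "prim_gen \<rho>' \<in> F"
    using F(3,4) prim_gen_in_ray assms(2,3) by blast+
  ultimately show ?thesis
    using that u by blast
qed

lemma adjacent_if_supporting_functional:
  assumes "\<rho> \<in> R" "\<rho>' \<in> R" "u \<noteq> 0" "\<forall>x\<in>\<sigma>. 0 \<le> u \<bullet> x"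
    "u \<bullet> prim_gen \<rho> = 0" "u \<bullet> prim_gen \<rho>' = 0"
  shows "adjacent \<rho> \<rho>'"
proof -
  define F where "F = \<sigma> \<inter> {x. u \<bullet> x = 0}"
  have "F face_of \<sigma>"
    unfolding F_def using assms(4) by (intro face_of_Int_supporting_hyperplane_ge convex_sigma) auto
  moreover have "F \<noteq> \<sigma>"
  proof
    assume "F = \<sigma>"
    then have "\<forall>\<rho>\<in>R. u \<bullet> prim_gen \<rho> = 0"
      unfolding F_def using prim_gen_in_sigma by blast
    then show False
      using eq_0_if_orthogonal_to_rays assms(3) by blast
  qed
  moreover have "\<rho> \<subseteq> F" "\<rho>' \<subseteq> F"
    unfolding F_def using in_ray_iff ray_subset assms(1,2,5,6) by auto
  ultimately show ?thesis
    unfolding adjacent_def by blast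
qed

lemma pair_in_restr_Xi_iff:
  assumes "P \<subseteq> R"
  shows "{\<rho>, \<rho>'} \<in> restr_Xi \<sigma> P \<longleftrightarrow> adjacent_in P \<rho> \<rho>'"
proof -
  have "{\<rho>, \<rho>'} \<in> restr_Xi \<sigma> P \<longleftrightarrow> \<rho> \<in> P \<and> \<rho>' \<in> P \<and> tau \<sigma> {\<rho>, \<rho>'} \<noteq> \<sigma>"
    unfolding restr_Xi_def Xi_def using assms by auto
  also have "\<dots> \<longleftrightarrow> adjacent_in P \<rho> \<rho>'"
  proof (cases "\<rho> \<in> P \<and> \<rho>' \<in> P")
    case True
    then have "\<forall>x\<in>{\<rho>, \<rho>'}. x \<subseteq> \<sigma>"
      using ray_subset assms by blast
    then show ?thesis
      unfolding adjacent_in_def adjacent_def using tau_ne_iff[OF convex_sigma] True by simp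
  qed (auto simp: adjacent_in_def)
  finally show ?thesis .
qed

lemma H0_vanishes_iff_connected:
  assumes "P \<subseteq> R"
  shows "reduced_H0_vanishes (restr_Xi \<sigma> P) TYPE('k::field) \<longleftrightarrow>
    (\<forall>a\<in>P. \<forall>b\<in>P. (adjacent_in P)\<^sup>*\<^sup>* a b)"
proof -
  have edges: "(\<lambda>x y. {x, y} \<in> restr_Xi \<sigma> P) = adjacent_in P"
    by (intro ext) (rule pair_in_restr_Xi_iff[OF assms])
  have vertices: "{v} \<in> restr_Xi \<sigma> P \<longleftrightarrow> v \<in> P" for v
    using pair_in_restr_Xi_iff[OF assms, of v v] adjacent_refl assms
    unfolding adjacent_in_def by auto
  show ?thesis
    unfolding reduced_H0_vanishes_iff_connected edges vertices by blast
qed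

section \<open>Disconnected \<open>\<Pi>\<close>: \<open>C\<^sup>s\<^sup>s\<^sub>\<Pi>\<close> is bounded\<close>

lemma supporting_functional_through_ray:
  assumes w: "w \<in> R" and v: "v \<in> R" "v \<noteq> w" and g: "g \<bullet> prim_gen w = 0"
  obtains a t where "a \<in> R" "a \<noteq> w"
    "\<forall>\<rho>\<in>R. 0 \<le> (g - t *\<^sub>R exposer w) \<bullet> prim_gen \<rho>" "(g - t *\<^sub>R exposer w) \<bullet> prim_gen a = 0"
proof -
  \<comment> \<open>Tilt \<open>g\<close> about the line through \<open>prim_gen w\<close> by the least slope \<open>q\<close> over the other rays.\<close>
  define f where "f = exposer w"
  define q where "q \<rho> = (g \<bullet> prim_gen \<rho>) / (f \<bullet> prim_gen \<rho>)" for \<rho>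
  have f_pos: "0 < f \<bullet> prim_gen \<rho>" if "\<rho> \<in> R - {w}" for \<rho>
    using that exposer_pos[OF w] unfolding f_def by blast
  obtain a where a: "a \<in> R - {w}" "\<And>\<rho>. \<rho> \<in> R - {w} \<Longrightarrow> q a \<le> q \<rho>"
    using ex_is_arg_min_if_finite[of "R - {w}" q] finite_rays v unfolding is_arg_min_linorder by auto
  have k: "(g - q a *\<^sub>R f) \<bullet> prim_gen \<rho> = (f \<bullet> prim_gen \<rho>) * (q \<rho> - q a)" if "\<rho> \<in> R - {w}" for \<rho>
    using f_pos[OF that] unfolding q_def by (simp add: inner_diff_left algebra_simps)
  have "0 \<le> (g - q a *\<^sub>R f) \<bullet> prim_gen \<rho>" if "\<rho> \<in> R" for \<rho>
  proof (cases "\<rho> = w")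
    case True
    then show ?thesis
      using g exposer_prim_gen[OF w] unfolding f_def by (simp add: inner_diff_left)
  next
    case False
    then have "\<rho> \<in> R - {w}"
      using that by simp
    then show ?thesis
      unfolding k[OF \<open>\<rho> \<in> R - {w}\<close>] using f_pos[OF \<open>\<rho> \<in> R - {w}\<close>] a(2)[OF \<open>\<rho> \<in> R - {w}\<close>]
      by simp
  qed
  moreover have "(g - q a *\<^sub>R f) \<bullet> prim_gen a = 0"
    using k[OF a(1)] by simp
  ultimately show ?thesis
    using that[of a "q a"] a(1) unfolding f_def by blast
qed

lemma facet_functionals_through_ray:
  assumes w: "w \<in> R" and v: "v \<in> R" "v \<noteq> w"
  obtains a c ka kc where "a \<in> R" "c \<in> R" "a \<noteq> w" "c \<noteq> w" "a \<noteq> c"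
    "\<forall>\<rho>\<in>R. 0 \<le> ka \<bullet> prim_gen \<rho>" "ka \<bullet> prim_gen w = 0" "ka \<bullet> prim_gen a = 0" "0 < ka \<bullet> prim_gen c"
    "\<forall>\<rho>\<in>R. 0 \<le> kc \<bullet> prim_gen \<rho>" "kc \<bullet> prim_gen w = 0" "kc \<bullet> prim_gen c = 0" "0 < kc \<bullet> prim_gen a"
proof -
  define f where "f = exposer w"
  define g where "g = prim_gen w \<times> f"
  have fw: "f \<bullet> prim_gen w = 0"
    unfolding f_def using exposer_prim_gen[OF w] .
  have gw: "g \<bullet> prim_gen w = 0" "(- g) \<bullet> prim_gen w = 0" and gf: "g \<bullet> f = 0"
    unfolding g_def by (simp_all add: dot_cross_self inner_commute)
  obtain a t where a: "a \<in> R" "a \<noteq> w" and ka: "\<forall>\<rho>\<in>R. 0 \<le> (g - t *\<^sub>R f) \<bullet> prim_gen \<rho>"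
    "(g - t *\<^sub>R f) \<bullet> prim_gen a = 0"
    using supporting_functional_through_ray[OF w v gw(1)] unfolding f_def by blast
  obtain c t' where c: "c \<in> R" "c \<noteq> w" and kc: "\<forall>\<rho>\<in>R. 0 \<le> (- g - t' *\<^sub>R f) \<bullet> prim_gen \<rho>"
    "(- g - t' *\<^sub>R f) \<bullet> prim_gen c = 0"
    using supporting_functional_through_ray[OF w v gw(2)] unfolding f_def by blast
  have "f \<noteq> 0"
    using exposer_pos[OF w v(1,2)] unfolding f_def by auto
  have "t + t' \<noteq> 0"
  proof
    assume "t + t' = 0"
    then have "- g - t' *\<^sub>R f = - (g - t *\<^sub>R f)"
      by (simp add: algebra_simps eq_neg_iff_add_eq_0[symmetric])
    then have "(g - t *\<^sub>R f) \<bullet> prim_gen \<rho> = 0" if "\<rho> \<in> R" for \<rho>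
      using ka(1) kc(1) that by (metis inner_minus_left neg_0_le_iff_le order_antisym)
    then have "g = t *\<^sub>R f"
      using eq_0_if_orthogonal_to_rays by force
    then have "g = 0"
      using gf \<open>f \<noteq> 0\<close> by simp
    moreover have "g \<noteq> 0"
      using norm_and_cross_eq_0[of "prim_gen w" f] prim_gen_nonzero[OF w] \<open>f \<noteq> 0\<close> fw
      unfolding g_def by (auto simp: inner_commute)
    ultimately show False
      by simp
  qed
  have sum: "(g - t *\<^sub>R f) \<bullet> x + (- g - t' *\<^sub>R f) \<bullet> x = - (t + t') * (f \<bullet> x)" for x
    by (simp add: inner_diff_left algebra_simps)
  have "0 < (g - t *\<^sub>R f) \<bullet> prim_gen c" "0 < (- g - t' *\<^sub>R f) \<bullet> prim_gen a"
    using sum[of "prim_gen c"] sum[of "prim_gen a"] ka kc a c \<open>t + t' \<noteq> 0\<close>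
      exposer_pos[OF w a(1,2)] exposer_pos[OF w c(1,2)] unfolding f_def
    by (auto simp: less_le mult_eq_0_iff)
  moreover have "(g - t *\<^sub>R f) \<bullet> prim_gen w = 0" "(- g - t' *\<^sub>R f) \<bullet> prim_gen w = 0"
    using gw fw by (simp_all add: inner_diff_left)
  moreover have "a \<noteq> c"
    using ka(2) calculation(1) by auto
  ultimately show ?thesis
    using that a c ka kc by blast
qed

lemma sigma_in_wedge_at_ray:
  assumes w: "w \<in> R" and v: "v \<in> R" "v \<noteq> w"
  obtains a c where "a \<in> R" "c \<in> R" "adjacent w a" "adjacent w c"
    "\<And>x. x \<in> \<sigma> \<Longrightarrow> \<exists>\<alpha> \<gamma> \<beta>. 0 \<le> \<alpha> \<and> 0 \<le> \<gamma> \<and>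
       x = \<alpha> *\<^sub>R prim_gen a + \<gamma> *\<^sub>R prim_gen c + \<beta> *\<^sub>R prim_gen w"
proof -
  obtain a c ka kc where ac: "a \<in> R" "c \<in> R" "a \<noteq> w" "c \<noteq> w" "a \<noteq> c"
    and ka: "\<forall>\<rho>\<in>R. 0 \<le> ka \<bullet> prim_gen \<rho>" "ka \<bullet> prim_gen w = 0" "ka \<bullet> prim_gen a = 0"
      "0 < ka \<bullet> prim_gen c"
    and kc: "\<forall>\<rho>\<in>R. 0 \<le> kc \<bullet> prim_gen \<rho>" "kc \<bullet> prim_gen w = 0" "kc \<bullet> prim_gen c = 0"
      "0 < kc \<bullet> prim_gen a"
    using facet_functionals_through_ray[OF assms] by blast
  have ka_sigma: "\<forall>x\<in>\<sigma>. 0 \<le> ka \<bullet> x" and kc_sigma: "\<forall>x\<in>\<sigma>. 0 \<le> kc \<bullet> x"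
    using nonneg_on_sigma_if_nonneg_on_rays ka(1) kc(1) by blast+
  have "ka \<noteq> 0" "kc \<noteq> 0"
    using ka(4) kc(4) by auto
  then have "adjacent w a" "adjacent w c"
    using adjacent_if_supporting_functional[OF w ac(1) _ ka_sigma ka(2,3)]
      adjacent_if_supporting_functional[OF w ac(2) _ kc_sigma kc(2,3)] by blast+
  moreover have "\<exists>\<alpha> \<gamma> \<beta>. 0 \<le> \<alpha> \<and> 0 \<le> \<gamma> \<and>
      x = \<alpha> *\<^sub>R prim_gen a + \<gamma> *\<^sub>R prim_gen c + \<beta> *\<^sub>R prim_gen w" if "x \<in> \<sigma>" for x
  proof -
    have "prim_gen a \<bullet> (prim_gen c \<times> prim_gen w) \<noteq> 0"
      using prim_gen_triple_nonzero ac w by blast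
    then obtain \<alpha> \<gamma> \<beta> where x: "x = \<alpha> *\<^sub>R prim_gen a + \<gamma> *\<^sub>R prim_gen c + \<beta> *\<^sub>R prim_gen w"
      by (rule in_span_if_triple_nonzero)
    then have "ka \<bullet> x = \<gamma> * (ka \<bullet> prim_gen c)" "kc \<bullet> x = \<alpha> * (kc \<bullet> prim_gen a)"
      using ka(2,3) kc(2,3) by (simp_all add: inner_add_right)
    then have "0 \<le> \<gamma>" "0 \<le> \<alpha>"
      using ka_sigma kc_sigma ka(4) kc(4) that by (metis zero_le_mult_iff not_less)+
    then show ?thesis
      using x by blast
  qed
  ultimately show ?thesis
    using that ac(1,2) by blast
qed

lemma descent_along_adjacent_ray:
  assumes w: "w \<in> R" "h \<bullet> prim_gen w = 0" and v: "v \<in> R" "h \<bullet> prim_gen v < 0"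
  shows "\<exists>a\<in>R. h \<bullet> prim_gen a < 0 \<and> adjacent w a"
proof -
  have "v \<noteq> w"
    using w(2) v(2) by auto
  then obtain a c where ac: "a \<in> R" "c \<in> R" "adjacent w a" "adjacent w c"
    and wedge: "\<And>x. x \<in> \<sigma> \<Longrightarrow> \<exists>\<alpha> \<gamma> \<beta>. 0 \<le> \<alpha> \<and> 0 \<le> \<gamma> \<and>
       x = \<alpha> *\<^sub>R prim_gen a + \<gamma> *\<^sub>R prim_gen c + \<beta> *\<^sub>R prim_gen w"
    using sigma_in_wedge_at_ray[OF w(1) v(1)] by blast
  obtain \<alpha> \<gamma> \<beta> where "0 \<le> \<alpha>" "0 \<le> \<gamma>"
    and "prim_gen v = \<alpha> *\<^sub>R prim_gen a + \<gamma> *\<^sub>R prim_gen c + \<beta> *\<^sub>R prim_gen w"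
    using wedge[OF prim_gen_in_sigma[OF v(1)]] by blast
  then have "\<alpha> * (h \<bullet> prim_gen a) + \<gamma> * (h \<bullet> prim_gen c) < 0"
    using w(2) v(2) by (simp add: inner_add_right)
  then have "h \<bullet> prim_gen a < 0 \<or> h \<bullet> prim_gen c < 0"
    using \<open>0 \<le> \<alpha>\<close> \<open>0 \<le> \<gamma>\<close> by (meson add_nonneg_nonneg mult_nonneg_nonneg not_less)
  then show ?thesis
    using ac by blast
qed

definition ratio :: "real^3 \<Rightarrow> (real^3) set \<Rightarrow> real" where
  "ratio m \<rho> = (m \<bullet> prim_gen \<rho>) / (height \<bullet> prim_gen \<rho>)"

lemma inner_prim_gen_eq_ratio: "\<rho> \<in> R \<Longrightarrow> m \<bullet> prim_gen \<rho> = (height \<bullet> prim_gen \<rho>) * ratio m \<rho>"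
  unfolding ratio_def using height_prim_gen_pos[of \<rho>] by simp

lemma ratio_minimizers_adjacent:
  assumes "\<forall>c. m \<noteq> c *\<^sub>R height" "a \<in> R" "b \<in> R"
    "\<forall>\<rho>\<in>R. ratio m a \<le> ratio m \<rho>" "ratio m b = ratio m a"
  shows "adjacent a b"
proof -
  define k where "k = m - ratio m a *\<^sub>R height"
  have k: "k \<bullet> prim_gen \<rho> = (height \<bullet> prim_gen \<rho>) * (ratio m \<rho> - ratio m a)" if "\<rho> \<in> R" for \<rho>
    unfolding k_def using inner_prim_gen_eq_ratio[OF that, of m]
    by (simp add: inner_diff_left algebra_simps)
  have "k \<noteq> 0"
    using assms(1) unfolding k_def by auto
  moreover have "\<forall>\<rho>\<in>R. 0 \<le> k \<bullet> prim_gen \<rho>"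
  proof
    fix \<rho> assume "\<rho> \<in> R"
    then show "0 \<le> k \<bullet> prim_gen \<rho>"
      unfolding k[OF \<open>\<rho> \<in> R\<close>] using height_prim_gen_pos[OF \<open>\<rho> \<in> R\<close>] assms(4) \<open>\<rho> \<in> R\<close>
      by simp
  qed
  then have "\<forall>x\<in>\<sigma>. 0 \<le> k \<bullet> x"
    using nonneg_on_sigma_if_nonneg_on_rays by blast
  moreover have "k \<bullet> prim_gen a = 0" "k \<bullet> prim_gen b = 0"
    using k[OF assms(2)] k[OF assms(3)] assms(5) by simp_all
  ultimately show ?thesis
    by (rule adjacent_if_supporting_functional[OF assms(2,3)])
qed

lemma adjacent_ray_with_lower_ratio:
  assumes "\<rho> \<in> R" "v \<in> R" "ratio m v < ratio m \<rho>"
  shows "\<exists>a\<in>R. adjacent \<rho> a \<and> ratio m a < ratio m \<rho>"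
proof -
  define h where "h = (height \<bullet> prim_gen \<rho>) *\<^sub>R m - (m \<bullet> prim_gen \<rho>) *\<^sub>R height"
  have h: "h \<bullet> prim_gen x = (height \<bullet> prim_gen \<rho>) * (height \<bullet> prim_gen x) * (ratio m x - ratio m \<rho>)"
    if "x \<in> R" for x
    unfolding h_def using inner_prim_gen_eq_ratio[OF that, of m] inner_prim_gen_eq_ratio[OF assms(1), of m]
    by (simp add: inner_diff_left algebra_simps)
  have pos: "0 < (height \<bullet> prim_gen \<rho>) * (height \<bullet> prim_gen x)" if "x \<in> R" for x
    using height_prim_gen_pos assms(1) that by simp
  have "h \<bullet> prim_gen \<rho> = 0"
    using h[OF assms(1)] by simp
  moreover have "h \<bullet> prim_gen v < 0"
    unfolding h[OF assms(2)] using pos[OF assms(2)] assms(3) by (intro mult_pos_neg) simp_all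
  ultimately obtain a where "a \<in> R" "h \<bullet> prim_gen a < 0" "adjacent \<rho> a"
    using descent_along_adjacent_ray assms(1,2) by blast
  moreover have "ratio m a < ratio m \<rho>"
  proof (rule ccontr)
    assume "\<not> ratio m a < ratio m \<rho>"
    then have "0 \<le> h \<bullet> prim_gen a"
      unfolding h[OF \<open>a \<in> R\<close>] using pos[OF \<open>a \<in> R\<close>] by simp
    then show False
      using \<open>h \<bullet> prim_gen a < 0\<close> by simp
  qed
  ultimately show ?thesis
    by blast
qed

lemma adjacent_in_with_lower_ratio:
  assumes P: "P \<subseteq> R" and neg: "\<And>\<rho>. \<rho> \<in> R \<Longrightarrow> m \<bullet> prim_gen \<rho> < 0 \<Longrightarrow> \<rho> \<in> P"
    and nonpos: "\<And>\<rho>. \<rho> \<in> P \<Longrightarrow> m \<bullet> prim_gen \<rho> \<le> 0"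
    and "\<rho> \<in> P" "v \<in> R" "ratio m v < ratio m \<rho>"
  obtains a where "adjacent_in P \<rho> a" "ratio m a < ratio m \<rho>"
proof -
  have "\<rho> \<in> R"
    using assms(4) P by blast
  then obtain a where a: "a \<in> R" "adjacent \<rho> a" "ratio m a < ratio m \<rho>"
    using adjacent_ray_with_lower_ratio assms(5,6) by blast
  have "ratio m \<rho> \<le> 0"
    using nonpos[OF assms(4)] height_prim_gen_pos[OF \<open>\<rho> \<in> R\<close>]
    unfolding inner_prim_gen_eq_ratio[OF \<open>\<rho> \<in> R\<close>, of m] by (simp add: mult_le_0_iff)
  then have "m \<bullet> prim_gen a < 0"
    using a(3) height_prim_gen_pos[OF a(1)] unfolding inner_prim_gen_eq_ratio[OF a(1), of m]
    by (simp add: mult_pos_neg)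
  then have "adjacent_in P \<rho> a"
    unfolding adjacent_in_def using neg a(1,2) assms(4) by blast
  then show ?thesis
    using that a(3) by blast
qed

lemma path_to_ratio_minimizer:
  assumes P: "P \<subseteq> R" and neg: "\<And>\<rho>. \<rho> \<in> R \<Longrightarrow> m \<bullet> prim_gen \<rho> < 0 \<Longrightarrow> \<rho> \<in> P"
    and nonpos: "\<And>\<rho>. \<rho> \<in> P \<Longrightarrow> m \<bullet> prim_gen \<rho> \<le> 0"
    and v0: "v0 \<in> R" "\<And>\<rho>. \<rho> \<in> R \<Longrightarrow> ratio m v0 \<le> ratio m \<rho>"
    and "\<rho> \<in> P"
  shows "\<exists>z\<in>P. ratio m z = ratio m v0 \<and> (adjacent_in P)\<^sup>*\<^sup>* \<rho> z"
  using \<open>\<rho> \<in> P\<close>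
proof (induction \<rho> rule: measure_induct_rule[where f = "\<lambda>\<rho>. card {x\<in>R. ratio m x < ratio m \<rho>}"])
  case (less \<rho>)
  show ?case
  proof (cases "ratio m \<rho> = ratio m v0")
    case False
    then have "ratio m v0 < ratio m \<rho>"
      using v0(2) less.prems P by force
    then obtain a where a: "adjacent_in P \<rho> a" "ratio m a < ratio m \<rho>"
      using adjacent_in_with_lower_ratio[OF P neg nonpos less.prems v0(1)] by blast
    then have "a \<in> P" "a \<in> R"
      unfolding adjacent_in_def using P by auto
    have "{x\<in>R. ratio m x < ratio m a} \<subseteq> {x\<in>R. ratio m x < ratio m \<rho>}"
      using a(2) by auto
    moreover have "a \<in> {x\<in>R. ratio m x < ratio m \<rho>} - {x\<in>R. ratio m x < ratio m a}"
      using \<open>a \<in> R\<close> a(2) by simp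
    ultimately have "card {x\<in>R. ratio m x < ratio m a} < card {x\<in>R. ratio m x < ratio m \<rho>}"
      using finite_rays by (intro psubset_card_mono) auto
    from less.IH[OF this \<open>a \<in> P\<close>] obtain z
      where "z \<in> P" "ratio m z = ratio m v0" "(adjacent_in P)\<^sup>*\<^sup>* a z"
      by blast
    then show ?thesis
      using converse_rtranclp_into_rtranclp[of "adjacent_in P" \<rho> a z] a(1) by blast
  qed (use less.prems in blast)
qed

lemma connected_if_nonpositive_functional:
  assumes P: "P \<subseteq> R" and npar: "\<forall>c. m \<noteq> c *\<^sub>R height"
    and neg: "\<And>\<rho>. \<rho> \<in> R \<Longrightarrow> m \<bullet> prim_gen \<rho> < 0 \<Longrightarrow> \<rho> \<in> P"
    and nonpos: "\<And>\<rho>. \<rho> \<in> P \<Longrightarrow> m \<bullet> prim_gen \<rho> \<le> 0"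
  shows "\<forall>a\<in>P. \<forall>b\<in>P. (adjacent_in P)\<^sup>*\<^sup>* a b"
proof (intro ballI)
  fix a b assume "a \<in> P" "b \<in> P"
  obtain v0 where v0: "v0 \<in> R" "\<And>\<rho>. \<rho> \<in> R \<Longrightarrow> ratio m v0 \<le> ratio m \<rho>"
    using ex_is_arg_min_if_finite[OF finite_rays rays_nonempty, of "ratio m"]
    unfolding is_arg_min_linorder by auto
  obtain za where za: "za \<in> P" "ratio m za = ratio m v0" "(adjacent_in P)\<^sup>*\<^sup>* a za"
    using path_to_ratio_minimizer[OF P neg nonpos v0 \<open>a \<in> P\<close>] by blast
  obtain zb where zb: "zb \<in> P" "ratio m zb = ratio m v0" "(adjacent_in P)\<^sup>*\<^sup>* b zb"
    using path_to_ratio_minimizer[OF P neg nonpos v0 \<open>b \<in> P\<close>] by blast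
  have "\<forall>\<rho>\<in>R. ratio m za \<le> ratio m \<rho>" "ratio m zb = ratio m za"
    using za(2) zb(2) v0(2) by simp_all
  then have "adjacent za zb"
    using ratio_minimizers_adjacent[OF npar] za(1) zb(1) P by blast
  then have "adjacent_in P za zb"
    unfolding adjacent_in_def using za(1) zb(1) by blast
  moreover have "(adjacent_in P)\<^sup>*\<^sup>* zb b"
    using rtranclp_sym[OF adjacent_in_sym zb(3)] .
  ultimately have "(adjacent_in P)\<^sup>*\<^sup>* za b"
    by (rule converse_rtranclp_into_rtranclp)
  then show "(adjacent_in P)\<^sup>*\<^sup>* a b"
    by (rule rtranclp_trans[OF za(3)])
qed

lemma rays_connected: "\<forall>a\<in>R. \<forall>b\<in>R. (adjacent_in R)\<^sup>*\<^sup>* a b"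
proof -
  obtain e where e: "\<And>c. e \<noteq> c *\<^sub>R height"
    using exists_not_parallel by blast
  define B where "B = (\<Sum>\<rho>\<in>R. \<bar>e \<bullet> prim_gen \<rho>\<bar> / (height \<bullet> prim_gen \<rho>))"
  define m where "m = e - B *\<^sub>R height"
  have "\<forall>c. m \<noteq> c *\<^sub>R height"
  proof (intro allI notI)
    fix c assume "m = c *\<^sub>R height"
    then have "e = (c + B) *\<^sub>R height"
      unfolding m_def by (metis diff_eq_eq scaleR_left_distrib)
    then show False
      using e by blast
  qed
  moreover have "m \<bullet> prim_gen \<rho> \<le> 0" if "\<rho> \<in> R" for \<rho>
  proof -
    have "0 \<le> \<bar>e \<bullet> prim_gen x\<bar> / (height \<bullet> prim_gen x)" if "x \<in> R" for x
      using height_prim_gen_pos[OF that] by simp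
    then have "\<bar>e \<bullet> prim_gen \<rho>\<bar> / (height \<bullet> prim_gen \<rho>) \<le> B"
      unfolding B_def using that finite_rays by (intro member_le_sum) auto
    then have "\<bar>e \<bullet> prim_gen \<rho>\<bar> \<le> B * (height \<bullet> prim_gen \<rho>)"
      using height_prim_gen_pos[OF that] by (simp add: divide_le_eq)
    then show ?thesis
      unfolding m_def by (simp add: inner_diff_left)
  qed
  ultimately show ?thesis
    using connected_if_nonpositive_functional[of R m] by blast
qed

lemma H0_vanishes_if_nonpositive_functional:
  assumes P: "P \<subseteq> R" and "m \<noteq> 0"
    and nonpos: "\<forall>\<rho>\<in>P. m \<bullet> prim_gen \<rho> \<le> 0" and nonneg: "\<forall>\<rho>\<in>R - P. 0 \<le> m \<bullet> prim_gen \<rho>"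
  shows "reduced_H0_vanishes (restr_Xi \<sigma> P) TYPE('k::field)"
  unfolding H0_vanishes_iff_connected[OF P]
proof (cases "\<forall>c. m \<noteq> c *\<^sub>R height")
  case True
  have "\<rho> \<in> P" if "\<rho> \<in> R" "m \<bullet> prim_gen \<rho> < 0" for \<rho>
    using nonneg that by (meson DiffI not_le)
  then show "\<forall>a\<in>P. \<forall>b\<in>P. (adjacent_in P)\<^sup>*\<^sup>* a b"
    using connected_if_nonpositive_functional[OF P True] nonpos by blast
next
  case False
  then obtain c where c: "m = c *\<^sub>R height" "c \<noteq> 0"
    using \<open>m \<noteq> 0\<close> by auto
  show "\<forall>a\<in>P. \<forall>b\<in>P. (adjacent_in P)\<^sup>*\<^sup>* a b"
  proof (cases "P = {}")
    case False
    \<comment> \<open>Then \<open>m\<close> is a negative multiple of \<open>height\<close>, so \<open>P\<close> contains every ray.\<close>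
    then obtain \<rho>0 where "\<rho>0 \<in> P"
      by blast
    then have "c * (height \<bullet> prim_gen \<rho>0) \<le> 0" "0 < height \<bullet> prim_gen \<rho>0"
      using nonpos c height_prim_gen_pos P by auto
    then have "c < 0"
      using c(2) by (simp add: mult_le_0_iff)
    have "\<rho> \<in> P" if "\<rho> \<in> R" for \<rho>
    proof (rule ccontr)
      assume "\<rho> \<notin> P"
      then have "0 \<le> c * (height \<bullet> prim_gen \<rho>)" "0 < height \<bullet> prim_gen \<rho>"
        using nonneg c that height_prim_gen_pos by auto
      then show False
        using \<open>c < 0\<close> by (simp add: zero_le_mult_iff)
    qed
    then have "P = R"
      using P by blast
    then show ?thesis
      using rays_connected by simp
  qed simp
qed

definition signed_gens :: "(real^3) set set \<Rightarrow> (real^3) set" where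
  "signed_gens P = (\<lambda>\<rho>. - prim_gen \<rho>) ` P \<union> prim_gen ` (R - P)"

lemma sigma_Pi_eq: "sigma_Pi \<sigma> P = convex_cone hull signed_gens P"
  unfolding sigma_Pi_def signed_gens_def ..

lemma finite_signed_gens: "P \<subseteq> R \<Longrightarrow> finite (signed_gens P)"
  unfolding signed_gens_def using finite_rays finite_subset by blast

lemma sigma_Pi_eq_UNIV_if_H0_nonvanishing:
  assumes P: "P \<subseteq> R" and H0: "\<not> reduced_H0_vanishes (restr_Xi \<sigma> P) TYPE('k::field)"
  shows "sigma_Pi \<sigma> P = UNIV"
proof (rule ccontr)
  assume "sigma_Pi \<sigma> P \<noteq> UNIV"
  then obtain a where "a \<noteq> 0" "\<And>w. w \<in> signed_gens P \<Longrightarrow> 0 \<le> a \<bullet> w"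
    using nonneg_functional_if_convex_cone_hull_neq_UNIV[OF finite_signed_gens[OF P]]
    unfolding sigma_Pi_eq by blast
  then have "\<forall>\<rho>\<in>P. a \<bullet> prim_gen \<rho> \<le> 0" "\<forall>\<rho>\<in>R - P. 0 \<le> a \<bullet> prim_gen \<rho>"
    unfolding signed_gens_def by force+
  then show False
    using H0_vanishes_if_nonpositive_functional[OF P \<open>a \<noteq> 0\<close>] H0 by blast
qed

lemma bounded_C_ss_if_H0_nonvanishing:
  assumes P: "P \<subseteq> R" and H0: "\<not> reduced_H0_vanishes (restr_Xi \<sigma> P) TYPE('k::field)"
  shows "bounded (C_ss \<sigma> n P)"
proof (rule bounded_if_bounded_below_on_spanning)
  show "convex_cone hull signed_gens P = UNIV"
    using sigma_Pi_eq_UNIV_if_H0_nonvanishing[OF P H0] unfolding sigma_Pi_eq .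
  fix w assume "w \<in> signed_gens P"
  then consider \<rho> where "\<rho> \<in> P" "w = - prim_gen \<rho>" | \<rho> where "\<rho> \<in> R - P" "w = prim_gen \<rho>"
    unfolding signed_gens_def by blast
  then show "\<exists>b. \<forall>m\<in>C_ss \<sigma> n P. b \<le> m \<bullet> w"
  proof cases
    case (1 \<rho>)
    then have "\<forall>m\<in>C_ss \<sigma> n P. of_int (n \<rho>) \<le> m \<bullet> w"
      unfolding C_ss_def by fastforce
    then show ?thesis ..
  next
    case (2 \<rho>)
    then have "\<forall>m\<in>C_ss \<sigma> n P. - of_int (n \<rho>) \<le> m \<bullet> w"
      unfolding C_ss_def by fastforce
    then show ?thesis ..
  qed
qed

section \<open>Connected \<open>\<Pi>\<close>: the recession cone is full-dimensional\<close>

lemma in_open_cone_of_two_rays: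
  assumes rays: "b \<in> R" "d \<in> R" "b \<noteq> d" and z: "z \<bullet> (prim_gen b \<times> prim_gen d) = 0"
    and pos: "0 < exposer b \<bullet> z" "0 < exposer d \<bullet> z"
  obtains \<beta> \<delta> where "0 < \<beta>" "0 < \<delta>" "z = \<beta> *\<^sub>R prim_gen b + \<delta> *\<^sub>R prim_gen d"
proof -
  obtain \<beta> \<delta> where z_eq: "z = \<beta> *\<^sub>R prim_gen b + \<delta> *\<^sub>R prim_gen d"
    using in_plane_if_triple_eq_0 prim_gen_cross_nonzero rays z by metis
  have "exposer b \<bullet> z = \<delta> * (exposer b \<bullet> prim_gen d)" "exposer d \<bullet> z = \<beta> * (exposer d \<bullet> prim_gen b)"
    unfolding z_eq using exposer_prim_gen[OF rays(1)] exposer_prim_gen[OF rays(2)]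
    by (simp_all add: inner_add_right)
  moreover have "0 < exposer b \<bullet> prim_gen d" "0 < exposer d \<bullet> prim_gen b"
    using exposer_pos[OF rays(1,2)] exposer_pos[OF rays(2,1)] rays(3) by auto
  ultimately have "0 < \<delta>" "0 < \<beta>"
    using pos zero_less_mult_pos2 by metis+
  then show ?thesis
    using that z_eq by blast
qed

lemma adjacent_rays_same_side:
  assumes adj: "adjacent q q'" and rays: "q \<in> R" "q' \<in> R" "b \<in> R" "d \<in> R"
    and distinct: "b \<noteq> d" "q \<notin> {b, d}" "q' \<notin> {b, d}"
    and pos: "0 < prim_gen q \<bullet> (prim_gen b \<times> prim_gen d)"
  shows "0 < prim_gen q' \<bullet> (prim_gen b \<times> prim_gen d)"
proof (rule ccontr)
  define \<phi> where "\<phi> \<rho> = prim_gen \<rho> \<bullet> (prim_gen b \<times> prim_gen d)" for \<rho>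
  assume "\<not> ?thesis"
  moreover have "\<phi> q' \<noteq> 0"
    unfolding \<phi>_def using prim_gen_triple_nonzero rays distinct by blast
  ultimately have neg: "\<phi> q' < 0"
    unfolding \<phi>_def by simp
  \<comment> \<open>The segment from \<open>prim_gen q\<close> to \<open>prim_gen q'\<close> crosses the plane through \<open>prim_gen b\<close>
    and \<open>prim_gen d\<close> at \<open>z\<close>, which lies both in the face containing \<open>q, q'\<close> and strictly
    between \<open>b\<close> and \<open>d\<close>; so that face would contain \<open>b\<close> as well.\<close>
  define z where "z = (- \<phi> q') *\<^sub>R prim_gen q + \<phi> q *\<^sub>R prim_gen q'"
  have plane: "z \<bullet> (prim_gen b \<times> prim_gen d) = 0"
    unfolding z_def \<phi>_def by (simp add: inner_add_left inner_diff_left algebra_simps)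
  have exposer_z: "0 < exposer \<rho> \<bullet> z" if "\<rho> \<in> {b, d}" for \<rho>
  proof -
    have "0 < exposer \<rho> \<bullet> prim_gen q" "0 < exposer \<rho> \<bullet> prim_gen q'"
      using exposer_pos that rays distinct by auto
    moreover have "0 < \<phi> q"
      unfolding \<phi>_def by (rule pos)
    ultimately have "0 < (- \<phi> q') * (exposer \<rho> \<bullet> prim_gen q) + \<phi> q * (exposer \<rho> \<bullet> prim_gen q')"
      using neg by (intro add_pos_pos mult_pos_pos) simp_all
    then show ?thesis
      unfolding z_def inner_add_right inner_scaleR_right .
  qed
  obtain \<beta> \<delta> where "0 < \<beta>" "0 < \<delta>" and z: "z = \<beta> *\<^sub>R prim_gen b + \<delta> *\<^sub>R prim_gen d"
    using in_open_cone_of_two_rays[OF rays(3,4) distinct(1) plane exposer_z exposer_z] by blast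
  obtain u where u: "u \<noteq> 0" "\<forall>x\<in>\<sigma>. 0 \<le> u \<bullet> x" "u \<bullet> prim_gen q = 0" "u \<bullet> prim_gen q' = 0"
    using supporting_functional_if_adjacent[OF adj rays(1,2)] by blast
  have "u \<bullet> z = 0"
    unfolding z_def using u(3,4) by (simp add: inner_add_right inner_diff_right)
  then have "\<beta> * (u \<bullet> prim_gen b) + \<delta> * (u \<bullet> prim_gen d) = 0"
    unfolding z by (simp add: inner_add_right)
  moreover have "0 \<le> \<beta> * (u \<bullet> prim_gen b)" "0 \<le> \<delta> * (u \<bullet> prim_gen d)"
    using u(2) prim_gen_in_sigma rays(3,4) \<open>0 < \<beta>\<close> \<open>0 < \<delta>\<close> by simp_all
  ultimately have "u \<bullet> prim_gen b = 0"
    using \<open>0 < \<beta>\<close> by (simp add: add_nonneg_eq_0_iff)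
  then have "prim_gen q \<bullet> (prim_gen q' \<times> prim_gen b) = 0"
    using triple_eq_0_if_orthogonal u by blast
  moreover have "q \<noteq> q'"
    using neg pos unfolding \<phi>_def by auto
  ultimately show False
    using prim_gen_triple_nonzero rays distinct by blast
qed

lemma connected_rays_same_side:
  assumes P: "P \<subseteq> R" and path: "(adjacent_in P)\<^sup>*\<^sup>* a c"
    and bd: "b \<in> R - P" "d \<in> R - P" "b \<noteq> d"
    and pos: "0 < prim_gen a \<bullet> (prim_gen b \<times> prim_gen d)"
  shows "0 < prim_gen c \<bullet> (prim_gen b \<times> prim_gen d)"
  using path pos
proof (induction rule: rtranclp_induct)
  case (step x y)
  then show ?case
    using adjacent_rays_same_side[of x y b d] P bd unfolding adjacent_in_def by blast
qed

lemma functional_separating_two_rays: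
  assumes P: "P \<subseteq> R" and conn: "(adjacent_in P)\<^sup>*\<^sup>* a1 a2" "a1 \<in> P"
    and b: "b1 \<in> R - P" "b2 \<in> R - P" "b1 \<noteq> b2"
  obtains g where "g \<bullet> prim_gen b1 = 0" "g \<bullet> prim_gen b2 = 0"
    "g \<bullet> prim_gen a1 < 0" "g \<bullet> prim_gen a2 < 0"
proof -
  have "a1 \<in> R"
    using assms by blast
  then have "prim_gen a1 \<bullet> (prim_gen b1 \<times> prim_gen b2) \<noteq> 0"
    using prim_gen_triple_nonzero b conn(2) by blast
  then obtain b d where bd: "(b, d) \<in> {(b1, b2), (b2, b1)}"
    and pos: "0 < prim_gen a1 \<bullet> (prim_gen b \<times> prim_gen d)"
    by (metis cross_skew inner_minus_right insertI1 insertI2 neg_0_less_iff_less linorder_neq_iff)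
  then have "0 < prim_gen a2 \<bullet> (prim_gen b \<times> prim_gen d)"
    using connected_rays_same_side[OF P conn(1)] b by blast
  moreover have "(- (prim_gen b \<times> prim_gen d)) \<bullet> prim_gen b1 = 0"
    "(- (prim_gen b \<times> prim_gen d)) \<bullet> prim_gen b2 = 0"
    using bd by (auto simp: dot_cross_self inner_commute)
  ultimately show ?thesis
    using that[of "- (prim_gen b \<times> prim_gen d)"] pos by (simp add: inner_commute)
qed

lemma separating_functional_for_few_rays:
  assumes P: "P \<subseteq> R" and conn: "\<forall>a\<in>P. \<forall>b\<in>P. (adjacent_in P)\<^sup>*\<^sup>* a b"
    and A: "A \<subseteq> P" "finite A" and B: "B \<subseteq> R - P" "finite B"
    and ne: "A \<union> B \<noteq> {}" and card: "card A + card B \<le> 4"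
  obtains g where "\<forall>a\<in>A. g \<bullet> prim_gen a \<le> 0" "\<forall>b\<in>B. 0 \<le> g \<bullet> prim_gen b"
    "(\<exists>a\<in>A. g \<bullet> prim_gen a < 0) \<or> (\<exists>b\<in>B. 0 < g \<bullet> prim_gen b)"
proof -
  note choose = that
  have "A \<subseteq> R" "B \<subseteq> R"
    using A(1) B(1) P by auto
  consider "B = {}" | "A = {}" | b where "B = {b}" "A \<noteq> {}" | a where "A = {a}" "B \<noteq> {}"
    | a1 a2 b1 b2 where "A = {a1, a2}" "a1 \<noteq> a2" "B = {b1, b2}" "b1 \<noteq> b2"
    using two_sets_card_le_4_cases[OF A(2) B(2) card] by metis
  then show ?thesis
  proof cases
    case 1
    have "\<forall>a\<in>A. (- height) \<bullet> prim_gen a < 0"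
      using height_prim_gen_pos \<open>A \<subseteq> R\<close> by auto
    then show ?thesis
      using 1 ne by (intro choose[of "- height"]) (auto intro: less_imp_le)
  next
    case 2
    have "\<forall>b\<in>B. 0 < height \<bullet> prim_gen b"
      using height_prim_gen_pos \<open>B \<subseteq> R\<close> by auto
    then show ?thesis
      using 2 ne by (intro choose[of height]) (auto intro: less_imp_le)
  next
    case (3 b)
    have "\<forall>a\<in>A. (- exposer b) \<bullet> prim_gen a < 0"
      using exposer_pos 3 A(1) B(1) P by force
    moreover have "(- exposer b) \<bullet> prim_gen b = 0"
      using exposer_prim_gen \<open>B \<subseteq> R\<close> 3 by simp
    ultimately show ?thesis
      using 3 by (intro choose[of "- exposer b"]) (auto intro: less_imp_le)
  next
    case (4 a)
    have "\<forall>b\<in>B. 0 < exposer a \<bullet> prim_gen b"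
      using exposer_pos 4 A(1) B(1) P by force
    moreover have "exposer a \<bullet> prim_gen a = 0"
      using exposer_prim_gen \<open>A \<subseteq> R\<close> 4 by simp
    ultimately show ?thesis
      using 4 by (intro choose[of "exposer a"]) (auto intro: less_imp_le)
  next
    case (5 a1 a2 b1 b2)
    then have "(adjacent_in P)\<^sup>*\<^sup>* a1 a2" "a1 \<in> P" "b1 \<in> R - P" "b2 \<in> R - P"
      using conn A(1) B(1) by auto
    then obtain g where "g \<bullet> prim_gen b1 = 0" "g \<bullet> prim_gen b2 = 0"
      "g \<bullet> prim_gen a1 < 0" "g \<bullet> prim_gen a2 < 0"
      using functional_separating_two_rays[OF P] \<open>b1 \<noteq> b2\<close> by blast
    then show ?thesis
      using choose[of g] 5 by auto
  qed
qed

lemma nonneg_functional_on_small_subset: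
  assumes P: "P \<subseteq> R" and conn: "\<forall>a\<in>P. \<forall>b\<in>P. (adjacent_in P)\<^sup>*\<^sup>* a b"
    and T: "T \<subseteq> signed_gens P" "finite T" "T \<noteq> {}" "card T \<le> 4"
  obtains g where "\<forall>v\<in>T. 0 \<le> g \<bullet> v" "\<exists>v\<in>T. 0 < g \<bullet> v"
proof -
  define A where "A = {\<rho>\<in>P. - prim_gen \<rho> \<in> T}"
  define B where "B = {\<rho>\<in>R - P. prim_gen \<rho> \<in> T}"
  have T_eq: "T = (\<lambda>\<rho>. - prim_gen \<rho>) ` A \<union> prim_gen ` B"
    using T(1) unfolding A_def B_def signed_gens_def by auto
  have "A \<subseteq> P" "B \<subseteq> R - P"
    unfolding A_def B_def by auto
  have "inj_on (\<lambda>\<rho>. - prim_gen \<rho>) A"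
    using prim_gen_inj P \<open>A \<subseteq> P\<close> unfolding inj_on_def by auto
  moreover have "inj_on prim_gen B"
    using prim_gen_inj \<open>B \<subseteq> R - P\<close> unfolding inj_on_def by auto
  moreover have "(\<lambda>\<rho>. - prim_gen \<rho>) ` A \<inter> prim_gen ` B = {}"
    using neg_prim_gen_neq P \<open>A \<subseteq> P\<close> \<open>B \<subseteq> R - P\<close> by blast
  moreover have "finite A" "finite B"
    using T(2) calculation(1,2) unfolding T_eq by (auto dest: finite_imageD)
  ultimately have "card A + card B = card T"
    unfolding T_eq by (simp add: card_Un_disjoint card_image)
  moreover have "A \<union> B \<noteq> {}"
    using T(3) unfolding T_eq by blast
  ultimately obtain g where "\<forall>a\<in>A. g \<bullet> prim_gen a \<le> 0" "\<forall>b\<in>B. 0 \<le> g \<bullet> prim_gen b"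
    "(\<exists>a\<in>A. g \<bullet> prim_gen a < 0) \<or> (\<exists>b\<in>B. 0 < g \<bullet> prim_gen b)"
    using separating_functional_for_few_rays[OF P conn \<open>A \<subseteq> P\<close> _ \<open>B \<subseteq> R - P\<close>] T(4)
      \<open>finite A\<close> \<open>finite B\<close> by metis
  note g = this
  show ?thesis
  proof (rule that)
    show "\<forall>v\<in>T. 0 \<le> g \<bullet> v"
      unfolding T_eq using g(1,2) by auto
    from g(3) show "\<exists>v\<in>T. 0 < g \<bullet> v"
    proof
      assume "\<exists>a\<in>A. g \<bullet> prim_gen a < 0"
      then obtain a where "a \<in> A" "g \<bullet> prim_gen a < 0"
        by blast
      then show ?thesis
        unfolding T_eq by (intro bexI[of _ "- prim_gen a"]) auto
    next
      assume "\<exists>b\<in>B. 0 < g \<bullet> prim_gen b"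
      then obtain b where "b \<in> B" "0 < g \<bullet> prim_gen b"
        by blast
      then show ?thesis
        unfolding T_eq by (intro bexI[of _ "prim_gen b"]) auto
    qed
  qed
qed

lemma zero_notin_convex_hull_signed_gens:
  assumes P: "P \<subseteq> R" and H0: "reduced_H0_vanishes (restr_Xi \<sigma> P) TYPE('k::field)"
  shows "0 \<notin> convex hull signed_gens P"
proof
  assume "0 \<in> convex hull signed_gens P"
  then obtain T u where T: "T \<subseteq> signed_gens P" "finite T" "T \<noteq> {}" "card T \<le> DIM(real^3) + 1"
    and u: "\<forall>v\<in>T. 0 < u v" "(\<Sum>v\<in>T. u v *\<^sub>R v) = 0"
    by (rule zero_in_convex_hull_positive_weights)
  have conn: "\<forall>a\<in>P. \<forall>b\<in>P. (adjacent_in P)\<^sup>*\<^sup>* a b"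
    using H0 H0_vanishes_iff_connected[OF P] by blast
  have "card T \<le> 4"
    using T(4) by simp
  then obtain g where g: "\<forall>v\<in>T. 0 \<le> g \<bullet> v" "\<exists>v\<in>T. 0 < g \<bullet> v"
    using nonneg_functional_on_small_subset[OF P conn T(1-3)] by blast
  have "(\<Sum>v\<in>T. u v * (g \<bullet> v)) = g \<bullet> (\<Sum>v\<in>T. u v *\<^sub>R v)"
    by (simp add: inner_sum_right)
  also have "\<dots> = 0"
    using u(2) by simp
  finally have "(\<Sum>v\<in>T. u v * (g \<bullet> v)) = 0" .
  moreover have "0 < (\<Sum>v\<in>T. u v * (g \<bullet> v))"
  proof -
    obtain v where "v \<in> T" "0 < g \<bullet> v"
      using g(2) by blast
    then show ?thesis
      using T(2) u(1) g(1) by (intro sum_pos2[of T v]) (auto intro: mult_nonneg_nonneg less_imp_le)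
  qed
  ultimately show False
    by simp
qed

lemma rec_cone_full_dim_if_H0_vanishes:
  assumes P: "P \<subseteq> R" and H0: "reduced_H0_vanishes (restr_Xi \<sigma> P) TYPE('k::field)"
  shows "aff_dim (rec_cone_C_Pi \<sigma> P) = 3"
proof -
  have "compact (convex hull signed_gens P)"
    using finite_signed_gens[OF P] by (rule finite_imp_compact_convex_hull)
  then obtain a b where "0 < b" "\<forall>x\<in>convex hull signed_gens P. b < a \<bullet> x"
    using separating_hyperplane_closed_0[OF convex_convex_hull compact_imp_closed
        zero_notin_convex_hull_signed_gens[OF P H0]] by blast
  then have "\<forall>w\<in>signed_gens P. 0 < a \<bullet> w"
    using hull_subset by fastforce
  then have "aff_dim {z. \<forall>v\<in>convex_cone hull signed_gens P. 0 \<le> z \<bullet> v} = DIM(real^3)"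
    by (rule aff_dim_dual_cone_eq_DIM[OF finite_signed_gens[OF P]])
  then show ?thesis
    unfolding rec_cone_C_Pi_def sigma_Pi_eq by simp
qed

end

theorem mainTheorem10:
  fixes \<sigma> :: "(real^3) set" and n :: "(real^3) set \<Rightarrow> int" and P :: "(real^3) set set"
  assumes "scrp_cone3 \<sigma>"
    and "P \<subseteq> rays \<sigma>"
  shows "(reduced_H0_vanishes (restr_Xi \<sigma> P) TYPE('k::field)
            \<and> aff_dim (rec_cone_C_Pi \<sigma> P) = 3)
         \<longleftrightarrow> \<not> (\<not> reduced_H0_vanishes (restr_Xi \<sigma> P) TYPE('k::field)
            \<and> (bounded (C_ss \<sigma> n P) \<or> C_ss \<sigma> n P = {}))"
proof -
  interpret cone3 \<sigma>
    using assms(1) by (rule cone3.intro)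
  show ?thesis
    using rec_cone_full_dim_if_H0_vanishes[OF assms(2)] bounded_C_ss_if_H0_nonvanishing[OF assms(2)]
    by blast
qed

end
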